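(* Let $\mathbf C$ be an admissible site and $\alpha$ an infinite cardinal. For a pro-covering morphism $f:V\to U$ and an object $W$ in $\mathrm{Pro}_\alpha\mathbf C$, the diagram \[{\rm Mor}(U,W)\to{\rm Mor}(V,W)\rightrightarrows{\rm Mor}(V\times_UV,W)\] is an equalizer of sets.
   Context: A coherent site is a small category with finite limits and a topology generated by finite coverings; a covering morphism is a morphism generating a covering sieve. $\mathbf C$ is admissible if its topology is subcanonical, finite coproducts $C=\coprod_iC_i$ exist with $\{C_i\to C\}$ a covering, there is a strict initial object, and finite coproducts are disjoint and stable under pullback. $\mathrm{Pro}_\alpha\mathbf C$ is the category whose objects are functors $F:I\to\mathbf C$ with $I$ a cofiltered category with at most $\alpha$ morphisms and ${\rm Mor}(F,G)=\lim_j\operatorname{colim}_i{\rm Mor}_{\mathbf C}(F(i),G(j))$. A morphism $f:V\to U$ in $\mathrm{Pro}_\alpha\mathbf C$ is a pro-covering morphism if it has a level representation $(V_i\to U_i)_{i\in I}$ by covering morphisms of $\mathbf C$. *)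

theory Defs
  imports Main
begin

record ('o, 'a) cat =
  Ob  :: "'o set"
  Ar  :: "'a set"
  Dom :: "'a \<Rightarrow> 'o"
  Cod :: "'a \<Rightarrow> 'o"
  Idt :: "'o \<Rightarrow> 'a"
  Cmp :: "'a \<Rightarrow> 'a \<Rightarrow> 'a"   (* Cmp g f = g o f *)

definition hom :: "('o,'a) cat \<Rightarrow> 'o \<Rightarrow> 'o \<Rightarrow> 'a set" where
  "hom C X Y = {f \<in> Ar C. Dom C f = X \<and> Cod C f = Y}"

definition category :: "('o,'a) cat \<Rightarrow> bool" where
  "category C \<longleftrightarrow>
     (\<forall>f\<in>Ar C. Dom C f \<in> Ob C \<and> Cod C f \<in> Ob C) \<and>
     (\<forall>X\<in>Ob C. Idt C X \<in> hom C X X) \<and>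
     (\<forall>f\<in>Ar C. \<forall>g\<in>Ar C. Cod C f = Dom C g \<longrightarrow> Cmp C g f \<in> hom C (Dom C f) (Cod C g)) \<and>
     (\<forall>f\<in>Ar C. Cmp C f (Idt C (Dom C f)) = f \<and> Cmp C (Idt C (Cod C f)) f = f) \<and>
     (\<forall>f\<in>Ar C. \<forall>g\<in>Ar C. \<forall>h\<in>Ar C. Cod C f = Dom C g \<longrightarrow> Cod C g = Dom C h \<longrightarrow>
        Cmp C h (Cmp C g f) = Cmp C (Cmp C h g) f)"

definition iso :: "('o,'a) cat \<Rightarrow> 'a \<Rightarrow> bool" where
  "iso C f \<longleftrightarrow> f \<in> Ar C \<and> (\<exists>g \<in> hom C (Cod C f) (Dom C f).
      Cmp C g f = Idt C (Dom C f) \<and> Cmp C f g = Idt C (Cod C f))"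

definition initial :: "('o,'a) cat \<Rightarrow> 'o \<Rightarrow> bool" where
  "initial C Z \<longleftrightarrow> Z \<in> Ob C \<and> (\<forall>Y\<in>Ob C. \<exists>!f. f \<in> hom C Z Y)"

definition terminal :: "('o,'a) cat \<Rightarrow> 'o \<Rightarrow> bool" where
  "terminal C T \<longleftrightarrow> T \<in> Ob C \<and> (\<forall>Y\<in>Ob C. \<exists>!f. f \<in> hom C Y T)"

definition is_pullback :: "('o,'a) cat \<Rightarrow> 'a \<Rightarrow> 'a \<Rightarrow> 'o \<Rightarrow> 'a \<Rightarrow> 'a \<Rightarrow> bool" where
  "is_pullback C f g P p q \<longleftrightarrow>
     f \<in> Ar C \<and> g \<in> Ar C \<and> Cod C f = Cod C g \<and>
     p \<in> hom C P (Dom C f) \<and> q \<in> hom C P (Dom C g) \<and> Cmp C f p = Cmp C g q \<and>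
     (\<forall>T\<in>Ob C. \<forall>a \<in> hom C T (Dom C f). \<forall>b \<in> hom C T (Dom C g).
        Cmp C f a = Cmp C g b \<longrightarrow>
        (\<exists>!h. h \<in> hom C T P \<and> Cmp C p h = a \<and> Cmp C q h = b))"

definition has_finite_limits :: "('o,'a) cat \<Rightarrow> bool" where
  "has_finite_limits C \<longleftrightarrow> (\<exists>T. terminal C T) \<and>
     (\<forall>f\<in>Ar C. \<forall>g\<in>Ar C. Cod C f = Cod C g \<longrightarrow> (\<exists>P p q. is_pullback C f g P p q))"

definition is_coproduct :: "('o,'a) cat \<Rightarrow> nat \<Rightarrow> (nat \<Rightarrow> 'o) \<Rightarrow> 'o \<Rightarrow> (nat \<Rightarrow> 'a) \<Rightarrow> bool" where
  "is_coproduct C n Cs X \<iota> \<longleftrightarrow> X \<in> Ob C \<and> (\<forall>i<n. \<iota> i \<in> hom C (Cs i) X) \<and>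
     (\<forall>Y\<in>Ob C. \<forall>h. (\<forall>i<n. h i \<in> hom C (Cs i) Y) \<longrightarrow>
        (\<exists>!g. g \<in> hom C X Y \<and> (\<forall>i<n. Cmp C g (\<iota> i) = h i)))"

definition sieve :: "('o,'a) cat \<Rightarrow> 'o \<Rightarrow> 'a set \<Rightarrow> bool" where
  "sieve C U S \<longleftrightarrow> U \<in> Ob C \<and> S \<subseteq> Ar C \<and> (\<forall>f\<in>S. Cod C f = U) \<and>
     (\<forall>f\<in>S. \<forall>h\<in>Ar C. Cod C h = Dom C f \<longrightarrow> Cmp C f h \<in> S)"

definition gen_sieve :: "('o,'a) cat \<Rightarrow> 'a set \<Rightarrow> 'a set" where
  "gen_sieve C F = {Cmp C f h | f h. f \<in> F \<and> h \<in> Ar C \<and> Cod C h = Dom C f}"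

definition pb_sieve :: "('o,'a) cat \<Rightarrow> 'a \<Rightarrow> 'a set \<Rightarrow> 'a set" where
  "pb_sieve C g S = {h \<in> Ar C. Cod C h = Dom C g \<and> Cmp C g h \<in> S}"

definition grothendieck_topology :: "('o,'a) cat \<Rightarrow> ('o \<Rightarrow> 'a set set) \<Rightarrow> bool" where
  "grothendieck_topology C J \<longleftrightarrow>
     (\<forall>U. \<forall>S\<in>J U. sieve C U S) \<and>
     (\<forall>U\<in>Ob C. {f \<in> Ar C. Cod C f = U} \<in> J U) \<and>
     (\<forall>U. \<forall>S\<in>J U. \<forall>g\<in>Ar C. Cod C g = U \<longrightarrow> pb_sieve C g S \<in> J (Dom C g)) \<and>
     (\<forall>U. \<forall>S\<in>J U. \<forall>R. sieve C U R \<longrightarrow> (\<forall>f\<in>S. pb_sieve C f R \<in> J (Dom C f)) \<longrightarrow> R \<in> J U)"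

definition finitary :: "('o,'a) cat \<Rightarrow> ('o \<Rightarrow> 'a set set) \<Rightarrow> bool" where
  "finitary C J \<longleftrightarrow> (\<forall>U. \<forall>S\<in>J U. \<exists>F. finite F \<and> F \<subseteq> S \<and> gen_sieve C F \<in> J U)"

definition coherent_site :: "('o,'a) cat \<Rightarrow> ('o \<Rightarrow> 'a set set) \<Rightarrow> bool" where
  "coherent_site C J \<longleftrightarrow> category C \<and> has_finite_limits C \<and>
     grothendieck_topology C J \<and> finitary C J"

definition covering_morphism :: "('o,'a) cat \<Rightarrow> ('o \<Rightarrow> 'a set set) \<Rightarrow> 'a \<Rightarrow> bool" where
  "covering_morphism C J f \<longleftrightarrow> f \<in> Ar C \<and> gen_sieve C {f} \<in> J (Cod C f)"

text \<open>Subcanonical: every representable presheaf is a sheaf.\<close>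
definition subcanonical :: "('o,'a) cat \<Rightarrow> ('o \<Rightarrow> 'a set set) \<Rightarrow> bool" where
  "subcanonical C J \<longleftrightarrow> (\<forall>W\<in>Ob C. \<forall>U. \<forall>S\<in>J U. \<forall>x.
     ((\<forall>f\<in>S. x f \<in> hom C (Dom C f) W) \<and>
      (\<forall>f\<in>S. \<forall>h\<in>Ar C. Cod C h = Dom C f \<longrightarrow> x (Cmp C f h) = Cmp C (x f) h)) \<longrightarrow>
     (\<exists>!g. g \<in> hom C U W \<and> (\<forall>f\<in>S. Cmp C g f = x f)))"

definition admissible :: "('o,'a) cat \<Rightarrow> ('o \<Rightarrow> 'a set set) \<Rightarrow> bool" where
  "admissible C J \<longleftrightarrow> coherent_site C J \<and> subcanonical C J \<and>
     \<comment> \<open>finite coproducts exist and the injections form a covering\<close>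
     (\<forall>n Cs. (\<forall>i<n. Cs i \<in> Ob C) \<longrightarrow>
        (\<exists>X \<iota>. is_coproduct C n Cs X \<iota> \<and> gen_sieve C (\<iota> ` {..<n}) \<in> J X)) \<and>
     \<comment> \<open>strict initial object\<close>
     (\<exists>Z. initial C Z \<and> (\<forall>f\<in>Ar C. Cod C f = Z \<longrightarrow> iso C f)) \<and>
     \<comment> \<open>finite coproducts are disjoint\<close>
     (\<forall>n Cs X \<iota>. is_coproduct C n Cs X \<iota> \<longrightarrow>
        (\<forall>i<n. \<forall>j<n. i \<noteq> j \<longrightarrow> (\<forall>P p q. is_pullback C (\<iota> i) (\<iota> j) P p q \<longrightarrow> initial C P))) \<and>
     \<comment> \<open>finite coproducts are stable under pullback\<close>
     (\<forall>n Cs X \<iota>. is_coproduct C n Cs X \<iota> \<longrightarrow>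
        (\<forall>y\<in>Ar C. Cod C y = X \<longrightarrow> (\<forall>P p q.
           (\<forall>i<n. is_pullback C y (\<iota> i) (P i) (p i) (q i)) \<longrightarrow>
           is_coproduct C n P (Dom C y) p)))"

text \<open>Index categories have objects and arrows in a type 'i. The cardinal alpha is
  represented as the cardinality of a set A.\<close>

definition cofiltered :: "('i,'i) cat \<Rightarrow> bool" where
  "cofiltered I \<longleftrightarrow> category I \<and> Ob I \<noteq> {} \<and>
     (\<forall>i\<in>Ob I. \<forall>j\<in>Ob I. \<exists>k u v. u \<in> hom I k i \<and> v \<in> hom I k j) \<and>
     (\<forall>i j. \<forall>u\<in>hom I i j. \<forall>v\<in>hom I i j. \<exists>w\<in>Ar I. Cod I w = i \<and> Cmp I u w = Cmp I v w)"

definition card_le :: "'x set \<Rightarrow> 'y set \<Rightarrow> bool" where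
  "card_le X Y \<longleftrightarrow> (\<exists>g. inj_on g X \<and> g ` X \<subseteq> Y)"

definition is_functor :: "('i,'i) cat \<Rightarrow> ('o,'a) cat \<Rightarrow> ('i \<Rightarrow> 'o) \<Rightarrow> ('i \<Rightarrow> 'a) \<Rightarrow> bool" where
  "is_functor I C Fo Fa \<longleftrightarrow>
     (\<forall>i\<in>Ob I. Fo i \<in> Ob C \<and> Fa (Idt I i) = Idt C (Fo i)) \<and>
     (\<forall>u\<in>Ar I. Fa u \<in> hom C (Fo (Dom I u)) (Fo (Cod I u))) \<and>
     (\<forall>u\<in>Ar I. \<forall>v\<in>Ar I. Cod I u = Dom I v \<longrightarrow> Fa (Cmp I v u) = Cmp C (Fa v) (Fa u))"

type_synonym ('i,'o,'a) proobj = "('i,'i) cat \<times> ('i \<Rightarrow> 'o) \<times> ('i \<Rightarrow> 'a)"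

definition pI :: "('i,'o,'a) proobj \<Rightarrow> ('i,'i) cat" where "pI X = fst X"
definition pF :: "('i,'o,'a) proobj \<Rightarrow> 'i \<Rightarrow> 'o" where "pF X = fst (snd X)"
definition pFa :: "('i,'o,'a) proobj \<Rightarrow> 'i \<Rightarrow> 'a" where "pFa X = snd (snd X)"

definition pro_obj :: "('o,'a) cat \<Rightarrow> 'x set \<Rightarrow> ('i,'o,'a) proobj \<Rightarrow> bool" where
  "pro_obj C A X \<longleftrightarrow> cofiltered (pI X) \<and> card_le (Ar (pI X)) A \<and>
     is_functor (pI X) C (pF X) (pFa X)"

text \<open>Representatives of elements of colim_i Mor_C(X(i), Y(j)), the equivalence
  relation of the cofiltered colimit, and equivalence classes.\<close>
definition prep :: "('o,'a) cat \<Rightarrow> ('i,'o,'a) proobj \<Rightarrow> ('i,'o,'a) proobj \<Rightarrow> 'i \<Rightarrow> 'i \<times> 'a \<Rightarrow> bool" where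
  "prep C X Y j p \<longleftrightarrow> fst p \<in> Ob (pI X) \<and> snd p \<in> hom C (pF X (fst p)) (pF Y j)"

definition peqv :: "('o,'a) cat \<Rightarrow> ('i,'o,'a) proobj \<Rightarrow> 'i \<times> 'a \<Rightarrow> 'i \<times> 'a \<Rightarrow> bool" where
  "peqv C X p q \<longleftrightarrow> (\<exists>k u v. u \<in> hom (pI X) k (fst p) \<and> v \<in> hom (pI X) k (fst q) \<and>
      Cmp C (snd p) (pFa X u) = Cmp C (snd q) (pFa X v))"

definition pcls :: "('o,'a) cat \<Rightarrow> ('i,'o,'a) proobj \<Rightarrow> ('i,'o,'a) proobj \<Rightarrow> 'i \<Rightarrow> 'i \<times> 'a \<Rightarrow> ('i \<times> 'a) set" where
  "pcls C X Y j p = {q. prep C X Y j q \<and> peqv C X p q}"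

text \<open>Mor(X,Y) = lim_j colim_i Mor_C(X(i), Y(j)): a morphism assigns to each
  index j of Y a class, compatibly with the transition maps of Y.\<close>
definition pro_mor :: "('o,'a) cat \<Rightarrow> ('i,'o,'a) proobj \<Rightarrow> ('i,'o,'a) proobj \<Rightarrow> ('i \<Rightarrow> ('i \<times> 'a) set) \<Rightarrow> bool" where
  "pro_mor C X Y \<phi> \<longleftrightarrow>
     (\<forall>j\<in>Ob (pI Y). \<exists>p. prep C X Y j p \<and> \<phi> j = pcls C X Y j p) \<and>
     (\<forall>j. j \<notin> Ob (pI Y) \<longrightarrow> \<phi> j = {}) \<and>
     (\<forall>v\<in>Ar (pI Y). \<forall>p\<in>\<phi> (Dom (pI Y) v). (fst p, Cmp C (pFa Y v) (snd p)) \<in> \<phi> (Cod (pI Y) v))"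

definition pmor :: "('o,'a) cat \<Rightarrow> ('i,'o,'a) proobj \<Rightarrow> ('i,'o,'a) proobj \<Rightarrow> ('i \<Rightarrow> ('i \<times> 'a) set) set" where
  "pmor C X Y = {\<phi>. pro_mor C X Y \<phi>}"

definition pcomp :: "('o,'a) cat \<Rightarrow> ('i,'o,'a) proobj \<Rightarrow> ('i,'o,'a) proobj \<Rightarrow> ('i,'o,'a) proobj \<Rightarrow>
    ('i \<Rightarrow> ('i \<times> 'a) set) \<Rightarrow> ('i \<Rightarrow> ('i \<times> 'a) set) \<Rightarrow> ('i \<Rightarrow> ('i \<times> 'a) set)" where
  "pcomp C X Y Z \<psi> \<phi> = (\<lambda>k. if k \<in> Ob (pI Z) then
      (let q = (SOME q. q \<in> \<psi> k); p = (SOME p. p \<in> \<phi> (fst q))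
       in pcls C X Z k (fst p, Cmp C (snd q) (snd p)))
     else {})"

definition pid :: "('o,'a) cat \<Rightarrow> ('i,'o,'a) proobj \<Rightarrow> ('i \<Rightarrow> ('i \<times> 'a) set)" where
  "pid C X = (\<lambda>j. if j \<in> Ob (pI X) then pcls C X X j (j, Idt C (pF X j)) else {})"

definition pro_iso :: "('o,'a) cat \<Rightarrow> ('i,'o,'a) proobj \<Rightarrow> ('i,'o,'a) proobj \<Rightarrow> ('i \<Rightarrow> ('i \<times> 'a) set) \<Rightarrow> bool" where
  "pro_iso C X Y \<phi> \<longleftrightarrow> pro_mor C X Y \<phi> \<and> (\<exists>\<psi>. pro_mor C Y X \<psi> \<and>
      pcomp C X Y X \<psi> \<phi> = pid C X \<and> pcomp C Y X Y \<phi> \<psi> = pid C Y)"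

definition plevel :: "('o,'a) cat \<Rightarrow> ('i,'o,'a) proobj \<Rightarrow> ('i,'o,'a) proobj \<Rightarrow> ('i \<Rightarrow> 'a) \<Rightarrow> ('i \<Rightarrow> ('i \<times> 'a) set)" where
  "plevel C X Y t = (\<lambda>i. if i \<in> Ob (pI Y) then pcls C X Y i (i, t i) else {})"

definition pro_covering :: "('o,'a) cat \<Rightarrow> ('o \<Rightarrow> 'a set set) \<Rightarrow> 'x set \<Rightarrow>
    ('i,'o,'a) proobj \<Rightarrow> ('i,'o,'a) proobj \<Rightarrow> ('i \<Rightarrow> ('i \<times> 'a) set) \<Rightarrow> bool" where
  "pro_covering C J A V U f \<longleftrightarrow> pro_mor C V U f \<and>
     (\<exists>V' U' t \<theta>V \<theta>U. pro_obj C A V' \<and> pro_obj C A U' \<and> pI V' = pI U' \<and>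
        (\<forall>i\<in>Ob (pI V'). t i \<in> hom C (pF V' i) (pF U' i) \<and> covering_morphism C J (t i)) \<and>
        (\<forall>u\<in>Ar (pI V'). Cmp C (pFa U' u) (t (Dom (pI V') u)) = Cmp C (t (Cod (pI V') u)) (pFa V' u)) \<and>
        pro_iso C V V' \<theta>V \<and> pro_iso C U U' \<theta>U \<and>
        pcomp C V U U' \<theta>U f = pcomp C V V' U' (plevel C V' U' t) \<theta>V)"

definition pro_pullback :: "('o,'a) cat \<Rightarrow> 'x set \<Rightarrow> ('i,'o,'a) proobj \<Rightarrow> ('i,'o,'a) proobj \<Rightarrow> ('i,'o,'a) proobj \<Rightarrow>
    ('i \<Rightarrow> ('i \<times> 'a) set) \<Rightarrow> ('i \<Rightarrow> ('i \<times> 'a) set) \<Rightarrow>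
    ('i,'o,'a) proobj \<Rightarrow> ('i \<Rightarrow> ('i \<times> 'a) set) \<Rightarrow> ('i \<Rightarrow> ('i \<times> 'a) set) \<Rightarrow> bool" where
  "pro_pullback C A V V' U f g P p q \<longleftrightarrow> pro_obj C A P \<and>
     pro_mor C V U f \<and> pro_mor C V' U g \<and> pro_mor C P V p \<and> pro_mor C P V' q \<and>
     pcomp C P V U f p = pcomp C P V' U g q \<and>
     (\<forall>T. pro_obj C A T \<longrightarrow> (\<forall>a\<in>pmor C T V. \<forall>b\<in>pmor C T V'.
        pcomp C T V U f a = pcomp C T V' U g b \<longrightarrow>
        (\<exists>!h. h \<in> pmor C T P \<and> pcomp C T P V p h = a \<and> pcomp C T P V' q h = b)))"

end

theory Submission
  imports Defs
begin

(* Up to isomorphism, f is a level map (t_i) of covering morphisms. Since the topology is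
   subcanonical, every t_i is an effective epimorphism: a morphism out of its source that
   coequalizes the kernel pair of t_i factors uniquely through t_i. The levelwise kernel pairs form
   a pro-object over the same index category, which maps to V x_U V; so a morphism h : V -> W
   coequalizing the two projections coequalizes every levelwise kernel pair on some representative.
   These representatives descend along the t_i and assemble to g : U -> W with g o f = h, and g is
   unique because the t_i are epimorphisms. *)

locale small_category =
  fixes C :: "('o,'a) cat"
  assumes category: "category C"
begin

lemma Dom_in_Ob: "f \<in> Ar C \<Longrightarrow> Dom C f \<in> Ob C"
  using category unfolding category_def by blast

lemma Cod_in_Ob: "f \<in> Ar C \<Longrightarrow> Cod C f \<in> Ob C"
  using category unfolding category_def by blast

lemma Idt_in_hom: "X \<in> Ob C \<Longrightarrow> Idt C X \<in> hom C X X"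
  using category unfolding category_def by blast

lemma Cmp_in_hom: "f \<in> hom C X Y \<Longrightarrow> g \<in> hom C Y Z \<Longrightarrow> Cmp C g f \<in> hom C X Z"
  using category unfolding category_def hom_def by auto

lemma Cmp_Idt_right: "f \<in> hom C X Y \<Longrightarrow> Cmp C f (Idt C X) = f"
  using category unfolding category_def hom_def by auto

lemma Cmp_Idt_left: "f \<in> hom C X Y \<Longrightarrow> Cmp C (Idt C Y) f = f"
  using category unfolding category_def hom_def by auto

lemma Cmp_assoc: "f \<in> hom C X Y \<Longrightarrow> g \<in> hom C Y Z \<Longrightarrow> h \<in> hom C Z W \<Longrightarrow>
    Cmp C h (Cmp C g f) = Cmp C (Cmp C h g) f"
  using category unfolding category_def hom_def by auto

end

definition pro_diagram :: "('o,'a) cat \<Rightarrow> ('i,'o,'a) proobj \<Rightarrow> bool" where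
  "pro_diagram C X \<longleftrightarrow> cofiltered (pI X) \<and> is_functor (pI X) C (pF X) (pFa X)"

lemma proobj_sel [simp]: "pI (I, Fo, Fa) = I" "pF (I, Fo, Fa) = Fo" "pFa (I, Fo, Fa) = Fa"
  by (simp_all add: pI_def pF_def pFa_def)

lemma pro_obj_pro_diagram: "pro_obj C A X \<Longrightarrow> pro_diagram C X"
  by (simp add: pro_obj_def pro_diagram_def)

lemma pro_diagram_index: "pro_diagram C X \<Longrightarrow> small_category (pI X)"
  by (simp add: pro_diagram_def cofiltered_def small_category_def)

lemma pro_diagram_Ob: "pro_diagram C X \<Longrightarrow> i \<in> Ob (pI X) \<Longrightarrow> pF X i \<in> Ob C"
  by (simp add: pro_diagram_def is_functor_def)

lemma pro_diagram_Idt: "pro_diagram C X \<Longrightarrow> i \<in> Ob (pI X) \<Longrightarrow> pFa X (Idt (pI X) i) = Idt C (pF X i)"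
  by (simp add: pro_diagram_def is_functor_def)

lemma pro_diagram_hom: "pro_diagram C X \<Longrightarrow> u \<in> hom (pI X) k i \<Longrightarrow> pFa X u \<in> hom C (pF X k) (pF X i)"
  by (auto simp add: pro_diagram_def is_functor_def hom_def)

lemma pro_diagram_Cmp: "pro_diagram C X \<Longrightarrow> u \<in> hom (pI X) k i \<Longrightarrow> v \<in> hom (pI X) i j \<Longrightarrow>
   pFa X (Cmp (pI X) v u) = Cmp C (pFa X v) (pFa X u)"
  by (auto simp add: pro_diagram_def is_functor_def hom_def)

lemma pro_diagram_cone: "pro_diagram C X \<Longrightarrow> i \<in> Ob (pI X) \<Longrightarrow> j \<in> Ob (pI X) \<Longrightarrow>
   \<exists>k u v. u \<in> hom (pI X) k i \<and> v \<in> hom (pI X) k j"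
  by (simp add: pro_diagram_def cofiltered_def)

lemma pro_diagram_equalize: "pro_diagram C X \<Longrightarrow> u \<in> hom (pI X) i j \<Longrightarrow> v \<in> hom (pI X) i j \<Longrightarrow>
   \<exists>k w. w \<in> hom (pI X) k i \<and> Cmp (pI X) u w = Cmp (pI X) v w"
  unfolding pro_diagram_def cofiltered_def hom_def by blast

lemma index_hom_in_Ob: "pro_diagram C X \<Longrightarrow> u \<in> hom (pI X) k i \<Longrightarrow> k \<in> Ob (pI X) \<and> i \<in> Ob (pI X)"
  using pro_diagram_index small_category.Dom_in_Ob small_category.Cod_in_Ob by (fastforce simp: hom_def)

definition pro_rep :: "('o,'a) cat \<Rightarrow> ('i,'o,'a) proobj \<Rightarrow> 'o \<Rightarrow> 'i \<times> 'a \<Rightarrow> bool" where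
  "pro_rep C X Z p \<longleftrightarrow> fst p \<in> Ob (pI X) \<and> snd p \<in> hom C (pF X (fst p)) Z"

lemma prep_eq_pro_rep: "prep C X Y j p = pro_rep C X (pF Y j) p" by (simp add: prep_def pro_rep_def)

definition level_map :: "('o,'a) cat \<Rightarrow> ('i,'o,'a) proobj \<Rightarrow> ('i,'o,'a) proobj \<Rightarrow> ('i \<Rightarrow> 'a) \<Rightarrow> bool" where
  "level_map C X Y t \<longleftrightarrow> pI X = pI Y \<and> (\<forall>i\<in>Ob (pI X). t i \<in> hom C (pF X i) (pF Y i)) \<and>
     (\<forall>u\<in>Ar (pI X). Cmp C (pFa Y u) (t (Dom (pI X) u)) = Cmp C (t (Cod (pI X) u)) (pFa X u))"

lemma level_map_index: "level_map C X Y t \<Longrightarrow> pI X = pI Y"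
  unfolding level_map_def by auto

lemma level_map_hom: "level_map C X Y t \<Longrightarrow> i \<in> Ob (pI X) \<Longrightarrow> t i \<in> hom C (pF X i) (pF Y i)"
  unfolding level_map_def by auto

lemma level_map_natural: "level_map C X Y t \<Longrightarrow> u \<in> hom (pI X) m k \<Longrightarrow>
    Cmp C (pFa Y u) (t m) = Cmp C (t k) (pFa X u)"
  unfolding level_map_def hom_def by auto

section \<open>Morphisms of pro-objects\<close>

context small_category begin

lemma pro_diagram_Cmp_restrict:
  assumes X: "pro_diagram C X" and s: "s \<in> hom C (pF X i) Z"
    and u: "u \<in> hom (pI X) k i" and w: "w \<in> hom (pI X) m k"
  shows "Cmp C (Cmp C s (pFa X u)) (pFa X w) = Cmp C s (pFa X (Cmp (pI X) u w))"
  using Cmp_assoc[OF pro_diagram_hom[OF X w] pro_diagram_hom[OF X u] s] pro_diagram_Cmp[OF X w u] by simp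

lemma peqv_refl:
  assumes X: "pro_diagram C X" and p: "pro_rep C X Z p"
  shows "peqv C X p p"
proof -
  interpret I: small_category "pI X" using pro_diagram_index[OF X] .
  show ?thesis unfolding peqv_def using p I.Idt_in_hom by (auto simp: pro_rep_def)
qed

lemma peqv_sym: "peqv C X p q \<Longrightarrow> peqv C X q p"
  unfolding peqv_def by metis

lemma peqv_trans:
  assumes X: "pro_diagram C X" and p: "pro_rep C X Z p" and q: "pro_rep C X Z q" and r: "pro_rep C X Z r"
    and pq: "peqv C X p q" and qr: "peqv C X q r"
  shows "peqv C X p r"
proof -
  interpret I: small_category "pI X" using pro_diagram_index[OF X] .
  note R = pro_diagram_Cmp_restrict[OF X]
  have sp: "snd p \<in> hom C (pF X (fst p)) Z" and sq: "snd q \<in> hom C (pF X (fst q)) Z"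
    and sr: "snd r \<in> hom C (pF X (fst r)) Z"
    using p q r by (simp_all add: pro_rep_def)
  obtain k u v where u: "u \<in> hom (pI X) k (fst p)" and v: "v \<in> hom (pI X) k (fst q)"
    and e1: "Cmp C (snd p) (pFa X u) = Cmp C (snd q) (pFa X v)"
    using pq unfolding peqv_def by blast
  obtain k' u' v' where u': "u' \<in> hom (pI X) k' (fst q)" and v': "v' \<in> hom (pI X) k' (fst r)"
    and e2: "Cmp C (snd q) (pFa X u') = Cmp C (snd r) (pFa X v')"
    using qr unfolding peqv_def by blast
  obtain m a b where a: "a \<in> hom (pI X) m k" and b: "b \<in> hom (pI X) m k'"
    using pro_diagram_cone[OF X] index_hom_in_Ob[OF X u] index_hom_in_Ob[OF X u'] by blast
  have va: "Cmp (pI X) v a \<in> hom (pI X) m (fst q)" and ub: "Cmp (pI X) u' b \<in> hom (pI X) m (fst q)"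
    using I.Cmp_in_hom[OF a v] I.Cmp_in_hom[OF b u'] .
  \<comment> \<open>the two restrictions of q to m need not agree; equalize the two index maps first\<close>
  obtain n w where w: "w \<in> hom (pI X) n m"
    and ew: "Cmp (pI X) (Cmp (pI X) v a) w = Cmp (pI X) (Cmp (pI X) u' b) w"
    using pro_diagram_equalize[OF X va ub] by blast
  have "Cmp C (snd p) (pFa X (Cmp (pI X) (Cmp (pI X) u a) w))
      = Cmp C (Cmp C (Cmp C (snd p) (pFa X u)) (pFa X a)) (pFa X w)"
    using R[OF sp I.Cmp_in_hom[OF a u] w] R[OF sp u a] by simp
  also have "\<dots> = Cmp C (snd q) (pFa X (Cmp (pI X) (Cmp (pI X) u' b) w))"
    using e1 R[OF sq v a] R[OF sq va w] ew by simp
  also have "\<dots> = Cmp C (Cmp C (Cmp C (snd r) (pFa X v')) (pFa X b)) (pFa X w)"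
    using e2 R[OF sq ub w] R[OF sq u' b] by simp
  also have "\<dots> = Cmp C (snd r) (pFa X (Cmp (pI X) (Cmp (pI X) v' b) w))"
    using R[OF sr v' b] R[OF sr I.Cmp_in_hom[OF b v'] w] by simp
  finally show ?thesis
    unfolding peqv_def using I.Cmp_in_hom[OF w I.Cmp_in_hom[OF a u]] I.Cmp_in_hom[OF w I.Cmp_in_hom[OF b v']]
    by blast
qed

lemma peqv_restrict:
  assumes X: "pro_diagram C X" and p: "pro_rep C X Z p" and u: "u \<in> hom (pI X) k (fst p)"
  shows "peqv C X p (k, Cmp C (snd p) (pFa X u))" and "pro_rep C X Z (k, Cmp C (snd p) (pFa X u))"
proof -
  interpret I: small_category "pI X" using pro_diagram_index[OF X] .
  have k: "k \<in> Ob (pI X)" using index_hom_in_Ob[OF X u] by auto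
  have pu: "Cmp C (snd p) (pFa X u) \<in> hom C (pF X k) Z"
    using p Cmp_in_hom[OF pro_diagram_hom[OF X u]] by (simp add: pro_rep_def)
  have "Cmp C (Cmp C (snd p) (pFa X u)) (pFa X (Idt (pI X) k)) = Cmp C (snd p) (pFa X u)"
    using pro_diagram_Idt[OF X k] Cmp_Idt_right[OF pu] by simp
  then show "peqv C X p (k, Cmp C (snd p) (pFa X u))"
    unfolding peqv_def using u I.Idt_in_hom[OF k] by fastforce
  show "pro_rep C X Z (k, Cmp C (snd p) (pFa X u))" using k pu by (simp add: pro_rep_def)
qed

lemma peqv_postcomp:
  assumes X: "pro_diagram C X" and p: "pro_rep C X Z p" and q: "pro_rep C X Z q"
    and e: "peqv C X p q" and g: "g \<in> hom C Z Z'"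
  shows "peqv C X (fst p, Cmp C g (snd p)) (fst q, Cmp C g (snd q))"
proof -
  obtain k u v where u: "u \<in> hom (pI X) k (fst p)" and v: "v \<in> hom (pI X) k (fst q)"
    and e1: "Cmp C (snd p) (pFa X u) = Cmp C (snd q) (pFa X v)"
    using e unfolding peqv_def by blast
  have "snd p \<in> hom C (pF X (fst p)) Z" and "snd q \<in> hom C (pF X (fst q)) Z"
    using p q by (simp_all add: pro_rep_def)
  then have "Cmp C (Cmp C g (snd p)) (pFa X u) = Cmp C (Cmp C g (snd q)) (pFa X v)"
    using Cmp_assoc[OF pro_diagram_hom[OF X u] _ g] Cmp_assoc[OF pro_diagram_hom[OF X v] _ g] e1
    by metis
  then show ?thesis unfolding peqv_def using u v by auto
qed

lemma mem_pcls_iff: "q \<in> pcls C X Y j p \<longleftrightarrow> pro_rep C X (pF Y j) q \<and> peqv C X p q"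
  by (simp add: pcls_def prep_eq_pro_rep)

lemma pcls_self: "pro_diagram C X \<Longrightarrow> pro_rep C X (pF Y j) p \<Longrightarrow> p \<in> pcls C X Y j p"
  using peqv_refl[of X "pF Y j" p] by (simp add: mem_pcls_iff)

lemma pro_mor_memD:
  assumes "pro_mor C X Y \<phi>" "p \<in> \<phi> j"
  shows "j \<in> Ob (pI Y)" "pro_rep C X (pF Y j) p"
proof -
  show j: "j \<in> Ob (pI Y)"
  proof (rule ccontr)
    assume "j \<notin> Ob (pI Y)" then have "\<phi> j = {}" using assms(1) unfolding pro_mor_def by simp
    then show False using assms(2) by simp
  qed
  then obtain r where "\<phi> j = pcls C X Y j r" using assms(1) unfolding pro_mor_def by auto
  then show "pro_rep C X (pF Y j) p" using assms(2) by (simp add: mem_pcls_iff)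
qed

lemma pro_mor_classE:
  assumes "pro_mor C X Y \<phi>" "j \<in> Ob (pI Y)"
  obtains r where "pro_rep C X (pF Y j) r" "\<phi> j = pcls C X Y j r"
  using assms unfolding pro_mor_def prep_eq_pro_rep by blast

lemma pro_mor_memE:
  assumes X: "pro_diagram C X" and "pro_mor C X Y \<phi>" "j \<in> Ob (pI Y)"
  obtains p where "p \<in> \<phi> j"
proof -
  obtain r where "pro_rep C X (pF Y j) r" "\<phi> j = pcls C X Y j r" using pro_mor_classE[OF assms(2,3)] by blast
  then show ?thesis using that pcls_self[OF X, of Y j r] by auto
qed

lemma pro_mor_mem_iff:
  assumes X: "pro_diagram C X" and m: "pro_mor C X Y \<phi>" and p: "p \<in> \<phi> j"
  shows "q \<in> \<phi> j \<longleftrightarrow> pro_rep C X (pF Y j) q \<and> peqv C X p q"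
proof -
  have j: "j \<in> Ob (pI Y)" and pp: "pro_rep C X (pF Y j) p" using pro_mor_memD[OF m p] by auto
  obtain r where r: "pro_rep C X (pF Y j) r" and e: "\<phi> j = pcls C X Y j r" using pro_mor_classE[OF m j] by blast
  have rp: "peqv C X r p" using p e by (simp add: mem_pcls_iff)
  show ?thesis
  proof
    assume "q \<in> \<phi> j"
    then have q: "pro_rep C X (pF Y j) q" and rq: "peqv C X r q" using e by (auto simp: mem_pcls_iff)
    show "pro_rep C X (pF Y j) q \<and> peqv C X p q" using q peqv_trans[OF X pp r q peqv_sym[OF rp] rq] by simp
  next
    assume a: "pro_rep C X (pF Y j) q \<and> peqv C X p q"
    then have "peqv C X r q" using peqv_trans[OF X r pp _ rp] by simp
    then show "q \<in> \<phi> j" using e a by (simp add: mem_pcls_iff)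
  qed
qed

lemma pro_mor_peqv: "pro_diagram C X \<Longrightarrow> pro_mor C X Y \<phi> \<Longrightarrow> p \<in> \<phi> j \<Longrightarrow> q \<in> \<phi> j \<Longrightarrow> peqv C X p q"
  using pro_mor_mem_iff[of X Y \<phi> p j q] by simp

lemma pro_mor_eqI:
  assumes X: "pro_diagram C X" and m1: "pro_mor C X Y \<phi>" and m2: "pro_mor C X Y \<psi>"
    and c: "\<And>j. j \<in> Ob (pI Y) \<Longrightarrow> \<exists>p. p \<in> \<phi> j \<and> p \<in> \<psi> j"
  shows "\<phi> = \<psi>"
proof
  fix j
  show "\<phi> j = \<psi> j"
  proof (cases "j \<in> Ob (pI Y)")
    case True
    then obtain p where p1: "p \<in> \<phi> j" and p2: "p \<in> \<psi> j" using c by blast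
    show ?thesis using pro_mor_mem_iff[OF X m1 p1] pro_mor_mem_iff[OF X m2 p2] by blast
  next
    case False then show ?thesis using m1 m2 unfolding pro_mor_def by simp
  qed
qed

lemma pro_mor_transition:
  assumes "pro_mor C X Y \<phi>" "v \<in> hom (pI Y) j j'" "p \<in> \<phi> j"
  shows "(fst p, Cmp C (pFa Y v) (snd p)) \<in> \<phi> j'"
  using assms unfolding pro_mor_def hom_def by blast

lemma pro_morI:
  assumes X: "pro_diagram C X" and Y: "pro_diagram C Y"
    and r: "\<And>j. j \<in> Ob (pI Y) \<Longrightarrow> pro_rep C X (pF Y j) (r j) \<and> \<phi> j = pcls C X Y j (r j)"
    and n: "\<And>j. j \<notin> Ob (pI Y) \<Longrightarrow> \<phi> j = {}"
    and t: "\<And>v a b. v \<in> hom (pI Y) a b \<Longrightarrow> peqv C X (fst (r a), Cmp C (pFa Y v) (snd (r a))) (r b)"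
  shows "pro_mor C X Y \<phi>"
proof -
  have "(fst p, Cmp C (pFa Y v) (snd p)) \<in> \<phi> (Cod (pI Y) v)"
    if v: "v \<in> Ar (pI Y)" and p: "p \<in> \<phi> (Dom (pI Y) v)" for v p
  proof -
    interpret I: small_category "pI Y" using pro_diagram_index[OF Y] .
    define a where "a = Dom (pI Y) v"
    define b where "b = Cod (pI Y) v"
    have va: "a \<in> Ob (pI Y)" "b \<in> Ob (pI Y)" using v I.Dom_in_Ob I.Cod_in_Ob a_def b_def by auto
    have vh: "v \<in> hom (pI Y) a b" using v by (simp add: hom_def a_def b_def)
    have Fv: "pFa Y v \<in> hom C (pF Y a) (pF Y b)" using pro_diagram_hom[OF Y vh] .
    have pp: "pro_rep C X (pF Y a) p" and rp: "peqv C X (r a) p"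
      using p r[OF va(1)] a_def by (auto simp: mem_pcls_iff)
    have ra: "pro_rep C X (pF Y a) (r a)" and rb: "pro_rep C X (pF Y b) (r b)"
      using r[OF va(1)] r[OF va(2)] by blast+
    have p2: "pro_rep C X (pF Y b) (fst p, Cmp C (pFa Y v) (snd p))"
      using pp Cmp_in_hom[OF _ Fv] by (auto simp: pro_rep_def)
    have r2: "pro_rep C X (pF Y b) (fst (r a), Cmp C (pFa Y v) (snd (r a)))"
      using ra Cmp_in_hom[OF _ Fv] by (auto simp: pro_rep_def)
    have "peqv C X (r b) (fst p, Cmp C (pFa Y v) (snd p))"
      using peqv_trans[OF X rb r2 p2 peqv_sym[OF t[OF vh]] peqv_postcomp[OF X ra pp rp Fv]] .
    then show ?thesis using p2 r[OF va(2)] b_def by (simp add: mem_pcls_iff)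
  qed
  moreover have "\<forall>j\<in>Ob (pI Y). \<exists>p. prep C X Y j p \<and> \<phi> j = pcls C X Y j p"
    using r unfolding prep_eq_pro_rep by blast
  ultimately show ?thesis unfolding pro_mor_def using n by blast
qed

lemma pcomp_rep_peqv:
  assumes X: "pro_diagram C X" and Y: "pro_diagram C Y" and Z: "pro_diagram C Z"
    and ps: "pro_mor C Y Z \<psi>" and ph: "pro_mor C X Y \<phi>"
    and q: "q \<in> \<psi> k" and q': "q' \<in> \<psi> k" and p: "p \<in> \<phi> (fst q)" and p': "p' \<in> \<phi> (fst q')"
  shows "peqv C X (fst p, Cmp C (snd q) (snd p)) (fst p', Cmp C (snd q') (snd p'))"
    "pro_rep C X (pF Z k) (fst p, Cmp C (snd q) (snd p))"
proof -
  interpret I: small_category "pI Y" using pro_diagram_index[OF Y] .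
  have k: "k \<in> Ob (pI Z)" and qr: "pro_rep C Y (pF Z k) q" using pro_mor_memD[OF ps q] by auto
  have qr': "pro_rep C Y (pF Z k) q'" using pro_mor_memD[OF ps q'] by auto
  have pr1: "pro_rep C X (pF Y (fst q)) p" using pro_mor_memD[OF ph p] by auto
  have pr1': "pro_rep C X (pF Y (fst q')) p'" using pro_mor_memD[OF ph p'] by auto
  have sq: "snd q \<in> hom C (pF Y (fst q)) (pF Z k)" using qr by (simp add: pro_rep_def)
  have sq': "snd q' \<in> hom C (pF Y (fst q')) (pF Z k)" using qr' by (simp add: pro_rep_def)
  have P1: "pro_rep C X (pF Z k) (fst p, Cmp C (snd q) (snd p))"
    using pr1 Cmp_in_hom[OF _ sq] by (auto simp: pro_rep_def)
  then show "pro_rep C X (pF Z k) (fst p, Cmp C (snd q) (snd p))" .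
  have P1': "pro_rep C X (pF Z k) (fst p', Cmp C (snd q') (snd p'))"
    using pr1' Cmp_in_hom[OF _ sq'] by (auto simp: pro_rep_def)
  have "peqv C Y q q'" using pro_mor_peqv[OF Y ps q q'] .
  then obtain m a b where a: "a \<in> hom (pI Y) m (fst q)" and b: "b \<in> hom (pI Y) m (fst q')"
    and e: "Cmp C (snd q) (pFa Y a) = Cmp C (snd q') (pFa Y b)" unfolding peqv_def by blast
  have m: "m \<in> Ob (pI Y)" using index_hom_in_Ob[OF Y a] by auto
  obtain p'' where p'': "p'' \<in> \<phi> m" using pro_mor_memE[OF X ph m] by blast
  have pr'': "pro_rep C X (pF Y m) p''" using pro_mor_memD[OF ph p''] by auto
  have sp'': "snd p'' \<in> hom C (pF X (fst p'')) (pF Y m)" using pr'' by (simp add: pro_rep_def)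
  have Fa: "pFa Y a \<in> hom C (pF Y m) (pF Y (fst q))" using pro_diagram_hom[OF Y a] .
  have Fb: "pFa Y b \<in> hom C (pF Y m) (pF Y (fst q'))" using pro_diagram_hom[OF Y b] .
  let ?x = "(fst p'', Cmp C (pFa Y a) (snd p''))" and ?y = "(fst p'', Cmp C (pFa Y b) (snd p''))"
  have xa: "?x \<in> \<phi> (fst q)" using pro_mor_transition[OF ph a p''] by simp
  have yb: "?y \<in> \<phi> (fst q')" using pro_mor_transition[OF ph b p''] by simp
  have xr: "pro_rep C X (pF Y (fst q)) ?x" using pro_mor_memD[OF ph xa] by auto
  have yr: "pro_rep C X (pF Y (fst q')) ?y" using pro_mor_memD[OF ph yb] by auto
  have e1: "peqv C X (fst p, Cmp C (snd q) (snd p)) (fst ?x, Cmp C (snd q) (snd ?x))"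
    using peqv_postcomp[OF X pr1 xr pro_mor_peqv[OF X ph p xa] sq] .
  have e2: "peqv C X (fst ?y, Cmp C (snd q') (snd ?y)) (fst p', Cmp C (snd q') (snd p'))"
    using peqv_postcomp[OF X yr pr1' pro_mor_peqv[OF X ph yb p'] sq'] .
  have eq: "Cmp C (snd q) (snd ?x) = Cmp C (snd q') (snd ?y)"
    using Cmp_assoc[OF sp'' Fa sq] Cmp_assoc[OF sp'' Fb sq'] e by simp
  have Xr: "pro_rep C X (pF Z k) (fst ?x, Cmp C (snd q) (snd ?x))" using xr Cmp_in_hom[OF _ sq] by (auto simp: pro_rep_def)
  show "peqv C X (fst p, Cmp C (snd q) (snd p)) (fst p', Cmp C (snd q') (snd p'))"
    using peqv_trans[OF X P1 Xr P1' e1] e2 eq by simp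
qed

lemma pcomp_at:
  assumes "k \<in> Ob (pI Z)"
  shows "pcomp C X Y Z \<psi> \<phi> k = pcls C X Z k (fst (SOME p. p \<in> \<phi> (fst (SOME q. q \<in> \<psi> k))),
      Cmp C (snd (SOME q. q \<in> \<psi> k)) (snd (SOME p. p \<in> \<phi> (fst (SOME q. q \<in> \<psi> k)))))"
  using assms unfolding pcomp_def Let_def by simp

lemma pcomp_some_mem:
  assumes X: "pro_diagram C X" and Y: "pro_diagram C Y" and Z: "pro_diagram C Z"
    and ps: "pro_mor C Y Z \<psi>" and ph: "pro_mor C X Y \<phi>" and k: "k \<in> Ob (pI Z)"
  shows "(SOME q. q \<in> \<psi> k) \<in> \<psi> k" "(SOME p. p \<in> \<phi> (fst (SOME q. q \<in> \<psi> k))) \<in> \<phi> (fst (SOME q. q \<in> \<psi> k))"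
proof -
  obtain q0 where "q0 \<in> \<psi> k" using pro_mor_memE[OF Y ps k] by blast
  then show q: "(SOME q. q \<in> \<psi> k) \<in> \<psi> k" by (rule someI)
  have "fst (SOME q. q \<in> \<psi> k) \<in> Ob (pI Y)" using pro_mor_memD[OF ps q] by (simp add: pro_rep_def)
  then obtain p0 where "p0 \<in> \<phi> (fst (SOME q. q \<in> \<psi> k))" using pro_mor_memE[OF X ph] by blast
  then show "(SOME p. p \<in> \<phi> (fst (SOME q. q \<in> \<psi> k))) \<in> \<phi> (fst (SOME q. q \<in> \<psi> k))" by (rule someI)
qed

lemma pcomp_memI:
  assumes X: "pro_diagram C X" and Y: "pro_diagram C Y" and Z: "pro_diagram C Z"
    and ps: "pro_mor C Y Z \<psi>" and ph: "pro_mor C X Y \<phi>"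
    and q: "q \<in> \<psi> k" and p: "p \<in> \<phi> (fst q)"
  shows "(fst p, Cmp C (snd q) (snd p)) \<in> pcomp C X Y Z \<psi> \<phi> k"
proof -
  have k: "k \<in> Ob (pI Z)" using pro_mor_memD[OF ps q] by auto
  note S = pcomp_some_mem[OF X Y Z ps ph k]
  show ?thesis unfolding pcomp_at[OF k] mem_pcls_iff
    using pcomp_rep_peqv[OF X Y Z ps ph S(1) q S(2) p] pcomp_rep_peqv[OF X Y Z ps ph q S(1) p S(2)] by simp
qed

lemma pcomp_pro_mor:
  assumes X: "pro_diagram C X" and Y: "pro_diagram C Y" and Z: "pro_diagram C Z"
    and ps: "pro_mor C Y Z \<psi>" and ph: "pro_mor C X Y \<phi>"
  shows "pro_mor C X Z (pcomp C X Y Z \<psi> \<phi>)"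
proof -
  define r where "r k = (fst (SOME p. p \<in> \<phi> (fst (SOME q. q \<in> \<psi> k))),
      Cmp C (snd (SOME q. q \<in> \<psi> k)) (snd (SOME p. p \<in> \<phi> (fst (SOME q. q \<in> \<psi> k)))))" for k
  show ?thesis
  proof (rule pro_morI[OF X Z, where r = r])
    fix k assume k: "k \<in> Ob (pI Z)"
    note S = pcomp_some_mem[OF X Y Z ps ph k]
    show "pro_rep C X (pF Z k) (r k) \<and> pcomp C X Y Z \<psi> \<phi> k = pcls C X Z k (r k)"
      using pcomp_rep_peqv(2)[OF X Y Z ps ph S(1) S(1) S(2) S(2)] pcomp_at[OF k] unfolding r_def by simp
  next
    fix k assume "k \<notin> Ob (pI Z)" then show "pcomp C X Y Z \<psi> \<phi> k = {}" unfolding pcomp_def by simp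
  next
    fix v a b assume vh: "v \<in> hom (pI Z) a b"
    have Fv: "pFa Z v \<in> hom C (pF Z a) (pF Z b)" using pro_diagram_hom[OF Z vh] .
    have a: "a \<in> Ob (pI Z)" and b: "b \<in> Ob (pI Z)" using index_hom_in_Ob[OF Z vh] by auto
    note S = pcomp_some_mem[OF X Y Z ps ph a]
    let ?q = "SOME q. q \<in> \<psi> a" and ?p = "SOME p. p \<in> \<phi> (fst (SOME q. q \<in> \<psi> a))"
    have q2: "(fst ?q, Cmp C (pFa Z v) (snd ?q)) \<in> \<psi> b" using pro_mor_transition[OF ps vh S(1)] .
    have m: "(fst ?p, Cmp C (Cmp C (pFa Z v) (snd ?q)) (snd ?p)) \<in> pcomp C X Y Z \<psi> \<phi> b"
      using pcomp_memI[OF X Y Z ps ph q2] S(2) by simp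
    have sq: "snd ?q \<in> hom C (pF Y (fst ?q)) (pF Z a)"
      using pro_mor_memD[OF ps S(1)] by (simp add: pro_rep_def)
    have sp: "snd ?p \<in> hom C (pF X (fst ?p)) (pF Y (fst ?q))"
      using pro_mor_memD[OF ph S(2)] by (simp add: pro_rep_def)
    have "peqv C X (r b) (fst ?p, Cmp C (Cmp C (pFa Z v) (snd ?q)) (snd ?p))"
      using m pcomp_at[OF b] unfolding r_def by (simp add: mem_pcls_iff)
    then show "peqv C X (fst (r a), Cmp C (pFa Z v) (snd (r a))) (r b)"
      using peqv_sym Cmp_assoc[OF sp sq Fv] unfolding r_def by simp
  qed
qed

lemma pcomp_assoc:
  assumes X: "pro_diagram C X" and Y: "pro_diagram C Y" and Z: "pro_diagram C Z" and W: "pro_diagram C W"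
    and ch: "pro_mor C Z W \<chi>" and ps: "pro_mor C Y Z \<psi>" and ph: "pro_mor C X Y \<phi>"
  shows "pcomp C X Z W \<chi> (pcomp C X Y Z \<psi> \<phi>) = pcomp C X Y W (pcomp C Y Z W \<chi> \<psi>) \<phi>"
proof (rule pro_mor_eqI[OF X])
  show "pro_mor C X W (pcomp C X Z W \<chi> (pcomp C X Y Z \<psi> \<phi>))"
    using pcomp_pro_mor[OF X Z W ch pcomp_pro_mor[OF X Y Z ps ph]] .
  show "pro_mor C X W (pcomp C X Y W (pcomp C Y Z W \<chi> \<psi>) \<phi>)"
    using pcomp_pro_mor[OF X Y W pcomp_pro_mor[OF Y Z W ch ps] ph] .
  fix k assume k: "k \<in> Ob (pI W)"
  obtain r where r: "r \<in> \<chi> k" using pro_mor_memE[OF Z ch k] by blast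
  have "fst r \<in> Ob (pI Z)" using pro_mor_memD[OF ch r] by (simp add: pro_rep_def)
  then obtain q where q: "q \<in> \<psi> (fst r)" using pro_mor_memE[OF Y ps] by blast
  have "fst q \<in> Ob (pI Y)" using pro_mor_memD[OF ps q] by (simp add: pro_rep_def)
  then obtain p where p: "p \<in> \<phi> (fst q)" using pro_mor_memE[OF X ph] by blast
  have sr: "snd r \<in> hom C (pF Z (fst r)) (pF W k)" using pro_mor_memD[OF ch r] by (simp add: pro_rep_def)
  have sq: "snd q \<in> hom C (pF Y (fst q)) (pF Z (fst r))" using pro_mor_memD[OF ps q] by (simp add: pro_rep_def)
  have sp: "snd p \<in> hom C (pF X (fst p)) (pF Y (fst q))" using pro_mor_memD[OF ph p] by (simp add: pro_rep_def)
  have m1: "(fst p, Cmp C (snd q) (snd p)) \<in> pcomp C X Y Z \<psi> \<phi> (fst r)" using pcomp_memI[OF X Y Z ps ph q p] .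
  have m2: "(fst q, Cmp C (snd r) (snd q)) \<in> pcomp C Y Z W \<chi> \<psi> k" using pcomp_memI[OF Y Z W ch ps r q] .
  have A: "(fst p, Cmp C (snd r) (Cmp C (snd q) (snd p))) \<in> pcomp C X Z W \<chi> (pcomp C X Y Z \<psi> \<phi>) k"
    using pcomp_memI[OF X Z W ch pcomp_pro_mor[OF X Y Z ps ph] r m1] by simp
  have B: "(fst p, Cmp C (Cmp C (snd r) (snd q)) (snd p)) \<in> pcomp C X Y W (pcomp C Y Z W \<chi> \<psi>) \<phi> k"
    using pcomp_memI[OF X Y W pcomp_pro_mor[OF Y Z W ch ps] ph m2] p by simp
  show "\<exists>x. x \<in> pcomp C X Z W \<chi> (pcomp C X Y Z \<psi> \<phi>) k \<and> x \<in> pcomp C X Y W (pcomp C Y Z W \<chi> \<psi>) \<phi> k"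
    using A B Cmp_assoc[OF sp sq sr] by auto
qed

lemma plevel_memI: "pro_diagram C X \<Longrightarrow> level_map C X Y t \<Longrightarrow> i \<in> Ob (pI Y) \<Longrightarrow> (i, t i) \<in> plevel C X Y t i"
  unfolding plevel_def level_map_def using pcls_self[of X Y i "(i, t i)"] by (simp add: pro_rep_def)

lemma plevel_pro_mor:
  assumes X: "pro_diagram C X" and Y: "pro_diagram C Y" and t: "level_map C X Y t"
  shows "pro_mor C X Y (plevel C X Y t)"
proof (rule pro_morI[OF X Y, where r = "\<lambda>j. (j, t j)"])
  have I: "pI X = pI Y" using level_map_index[OF t] .
  fix j assume "j \<in> Ob (pI Y)"
  then show "pro_rep C X (pF Y j) (j, t j) \<and> plevel C X Y t j = pcls C X Y j (j, t j)"
    using level_map_hom[OF t] I unfolding plevel_def by (simp add: pro_rep_def)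
next
  fix j assume "j \<notin> Ob (pI Y)" then show "plevel C X Y t j = {}" unfolding plevel_def by simp
next
  have I: "pI X = pI Y" using level_map_index[OF t] .
  interpret I: small_category "pI X" using pro_diagram_index[OF X] .
  fix v a b assume vh: "v \<in> hom (pI Y) a b"
  have a: "a \<in> Ob (pI X)" using index_hom_in_Ob[OF Y vh] I by simp
  have ta: "t a \<in> hom C (pF X a) (pF Y a)" using level_map_hom[OF t a] .
  have Fv: "pFa Y v \<in> hom C (pF Y a) (pF Y b)" using pro_diagram_hom[OF Y vh] .
  have "Cmp C (Cmp C (pFa Y v) (t a)) (pFa X (Idt (pI X) a)) = Cmp C (t b) (pFa X v)"
    using pro_diagram_Idt[OF X a] Cmp_Idt_right[OF Cmp_in_hom[OF ta Fv]] level_map_natural[OF t] vh I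
    by simp
  then show "peqv C X (fst (a, t a), Cmp C (pFa Y v) (snd (a, t a))) (b, t b)"
    unfolding peqv_def using I.Idt_in_hom[OF a] vh I by fastforce
qed

lemma level_map_Idt:
  assumes X: "pro_diagram C X" shows "level_map C X X (\<lambda>j. Idt C (pF X j))"
  unfolding level_map_def
proof (intro conjI ballI)
  fix u assume "u \<in> Ar (pI X)"
  then have "pFa X u \<in> hom C (pF X (Dom (pI X) u)) (pF X (Cod (pI X) u))"
    using pro_diagram_hom[OF X] by (simp add: hom_def)
  then show "Cmp C (pFa X u) (Idt C (pF X (Dom (pI X) u))) = Cmp C (Idt C (pF X (Cod (pI X) u))) (pFa X u)"
    using Cmp_Idt_left Cmp_Idt_right by simp
qed (use Idt_in_hom[OF pro_diagram_Ob[OF X]] in simp_all)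

lemma pid_eq_plevel: "pid C X = plevel C X X (\<lambda>j. Idt C (pF X j))"
  unfolding pid_def plevel_def ..

lemma pid_memI: "pro_diagram C X \<Longrightarrow> j \<in> Ob (pI X) \<Longrightarrow> (j, Idt C (pF X j)) \<in> pid C X j"
  unfolding pid_eq_plevel by (rule plevel_memI[OF _ level_map_Idt])

lemma pid_pro_mor: "pro_diagram C X \<Longrightarrow> pro_mor C X X (pid C X)"
  unfolding pid_eq_plevel by (rule plevel_pro_mor[OF _ _ level_map_Idt])

lemma pcomp_pid_left:
  assumes X: "pro_diagram C X" and Y: "pro_diagram C Y" and ph: "pro_mor C X Y \<phi>"
  shows "pcomp C X Y Y (pid C Y) \<phi> = \<phi>"
proof (rule pro_mor_eqI[OF X pcomp_pro_mor[OF X Y Y pid_pro_mor[OF Y] ph] ph])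
  fix k assume k: "k \<in> Ob (pI Y)"
  obtain p where p: "p \<in> \<phi> k" using pro_mor_memE[OF X ph k] by blast
  have sp: "snd p \<in> hom C (pF X (fst p)) (pF Y k)" using pro_mor_memD[OF ph p] by (simp add: pro_rep_def)
  have "(fst p, Cmp C (Idt C (pF Y k)) (snd p)) \<in> pcomp C X Y Y (pid C Y) \<phi> k"
    using pcomp_memI[OF X Y Y pid_pro_mor[OF Y] ph pid_memI[OF Y k]] p by simp
  then have "p \<in> pcomp C X Y Y (pid C Y) \<phi> k" using Cmp_Idt_left[OF sp] by simp
  then show "\<exists>x. x \<in> pcomp C X Y Y (pid C Y) \<phi> k \<and> x \<in> \<phi> k" using p by blast
qed

lemma pcomp_pid_right:
  assumes X: "pro_diagram C X" and Y: "pro_diagram C Y" and ph: "pro_mor C X Y \<phi>"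
  shows "pcomp C X X Y \<phi> (pid C X) = \<phi>"
proof (rule pro_mor_eqI[OF X pcomp_pro_mor[OF X X Y ph pid_pro_mor[OF X]] ph])
  fix k assume k: "k \<in> Ob (pI Y)"
  obtain q where q: "q \<in> \<phi> k" using pro_mor_memE[OF X ph k] by blast
  have sq: "snd q \<in> hom C (pF X (fst q)) (pF Y k)" and fq: "fst q \<in> Ob (pI X)"
    using pro_mor_memD[OF ph q] by (auto simp add: pro_rep_def)
  have "(fst q, Cmp C (snd q) (Idt C (pF X (fst q)))) \<in> pcomp C X X Y \<phi> (pid C X) k"
    using pcomp_memI[OF X X Y ph pid_pro_mor[OF X] q pid_memI[OF X fq]] by simp
  then have "q \<in> pcomp C X X Y \<phi> (pid C X) k" using Cmp_Idt_right[OF sq] by simp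
  then show "\<exists>x. x \<in> pcomp C X X Y \<phi> (pid C X) k \<and> x \<in> \<phi> k" using q by blast
qed

section \<open>Covering morphisms of a subcanonical site\<close>

lemma gen_sieve_singleton_iff:
  "s \<in> gen_sieve C {t} \<longleftrightarrow> (\<exists>h. s = Cmp C t h \<and> h \<in> Ar C \<and> Cod C h = Dom C t)"
  unfolding gen_sieve_def by blast

lemma subcanonicalD:
  assumes "subcanonical C J" and "W \<in> Ob C" and "S \<in> J U"
    and "\<forall>f\<in>S. x f \<in> hom C (Dom C f) W"
    and "\<forall>f\<in>S. \<forall>h\<in>Ar C. Cod C h = Dom C f \<longrightarrow> x (Cmp C f h) = Cmp C (x f) h"
  shows "\<exists>!g. g \<in> hom C U W \<and> (\<forall>f\<in>S. Cmp C g f = x f)"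
  using assms(1)[unfolded subcanonical_def, rule_format, OF assms(2,3)] assms(4,5) by blast

lemma is_pullback_ex1:
  assumes "is_pullback C f g P p q" and "T \<in> Ob C"
    and "a \<in> hom C T (Dom C f)" and "b \<in> hom C T (Dom C g)" and "Cmp C f a = Cmp C g b"
  shows "\<exists>!h. h \<in> hom C T P \<and> Cmp C p h = a \<and> Cmp C q h = b"
  using assms unfolding is_pullback_def by blast

lemma gen_sieve_singletonE:
  assumes "f \<in> gen_sieve C {t}"
  obtains h where "f = Cmp C t h" and "h \<in> hom C (Dom C h) (Dom C t)"
  using assms unfolding gen_sieve_singleton_iff by (auto simp: hom_def)

lemma covering_morphism_epi:
  assumes sc: "subcanonical C J" and t: "covering_morphism C J t"
    and d: "d \<in> hom C (Cod C t) W" and d': "d' \<in> hom C (Cod C t) W" and e: "Cmp C d t = Cmp C d' t"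
  shows "d = d'"
proof -
  let ?S = "gen_sieve C {t}" and ?U = "Cod C t"
  have SJ: "?S \<in> J ?U" and th: "t \<in> hom C (Dom C t) ?U"
    using t by (auto simp: covering_morphism_def hom_def)
  have W: "W \<in> Ob C" using d Cod_in_Ob by (auto simp: hom_def)
  have sieve_hom: "f \<in> hom C (Dom C f) ?U" if "f \<in> ?S" for f
    using that Cmp_in_hom[OF _ th] by (elim gen_sieve_singletonE) (simp add: hom_def)
  have "\<exists>!g. g \<in> hom C ?U W \<and> (\<forall>f\<in>?S. Cmp C g f = Cmp C d f)"
  proof (rule subcanonicalD[OF sc W SJ]; intro ballI impI)
    fix f assume f: "f \<in> ?S"
    then show "Cmp C d f \<in> hom C (Dom C f) W" using Cmp_in_hom[OF sieve_hom d] by blast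
    fix h assume "h \<in> Ar C" "Cod C h = Dom C f"
    then show "Cmp C d (Cmp C f h) = Cmp C (Cmp C d f) h"
      using Cmp_assoc[OF _ sieve_hom[OF f] d] by (simp add: hom_def)
  qed
  moreover have "Cmp C d' f = Cmp C d f" if "f \<in> ?S" for f
    using that by (elim gen_sieve_singletonE) (use Cmp_assoc[OF _ th d] Cmp_assoc[OF _ th d'] e in simp)
  ultimately show ?thesis using d d' by blast
qed

lemma kernel_pair_coequalizer_eq:
  assumes pb: "is_pullback C t t P p q" and c: "c \<in> hom C (Dom C t) W" and e: "Cmp C c p = Cmp C c q"
    and h: "h \<in> hom C T (Dom C t)" and h': "h' \<in> hom C T (Dom C t)" and th: "Cmp C t h = Cmp C t h'"
  shows "Cmp C c h = Cmp C c h'"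
proof -
  have "T \<in> Ob C" using h Dom_in_Ob by (auto simp: hom_def)
  then obtain m where m: "m \<in> hom C T P" "Cmp C p m = h" "Cmp C q m = h'"
    using is_pullback_ex1[OF pb _ h h' th] by blast
  have "p \<in> hom C P (Dom C t)" and "q \<in> hom C P (Dom C t)" using pb unfolding is_pullback_def by auto
  then show ?thesis using m Cmp_assoc[OF m(1) _ c] e by metis
qed

lemma covering_morphism_descent:
  assumes sc: "subcanonical C J" and t: "covering_morphism C J t" and pb: "is_pullback C t t P p q"
    and c: "c \<in> hom C (Dom C t) W" and e: "Cmp C c p = Cmp C c q"
  shows "\<exists>d\<in>hom C (Cod C t) W. Cmp C d t = c"
proof -
  let ?S = "gen_sieve C {t}" and ?U = "Cod C t"
  have SJ: "?S \<in> J ?U" and th: "t \<in> hom C (Dom C t) ?U"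
    using t by (auto simp: covering_morphism_def hom_def)
  have W: "W \<in> Ob C" using c Cod_in_Ob by (auto simp: hom_def)
  \<comment> \<open>the descent datum on the sieve generated by t; well defined since c coequalizes the kernel pair\<close>
  define x where "x s = Cmp C c (SOME h. h \<in> Ar C \<and> Cod C h = Dom C t \<and> s = Cmp C t h)" for s
  have x: "x (Cmp C t h) = Cmp C c h" if h: "h \<in> hom C (Dom C h) (Dom C t)" for h
  proof -
    define h' where "h' = (SOME h'. h' \<in> Ar C \<and> Cod C h' = Dom C t \<and> Cmp C t h = Cmp C t h')"
    have "h' \<in> Ar C \<and> Cod C h' = Dom C t \<and> Cmp C t h = Cmp C t h'"
      unfolding h'_def by (rule someI[of _ h]) (use h in \<open>simp add: hom_def\<close>)
    then have h': "h' \<in> Ar C" "Cod C h' = Dom C t" "Cmp C t h = Cmp C t h'" by auto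
    have dom: "Dom C (Cmp C t k) = Dom C k" if "k \<in> Ar C" "Cod C k = Dom C t" for k
      using Cmp_in_hom[of k "Dom C k" "Dom C t" t] th that by (simp add: hom_def)
    have "Dom C h' = Dom C h" using dom[OF h'(1,2)] h'(3) dom[of h] h by (simp add: hom_def)
    then have "h' \<in> hom C (Dom C h) (Dom C t)" using h' by (simp add: hom_def)
    then show ?thesis
      unfolding x_def h'_def[symmetric] using kernel_pair_coequalizer_eq[OF pb c e h] h'(3) by simp
  qed
  have "\<exists>!g. g \<in> hom C ?U W \<and> (\<forall>f\<in>?S. Cmp C g f = x f)"
  proof (rule subcanonicalD[OF sc W SJ]; intro ballI impI)
    fix f assume "f \<in> ?S"
    then obtain h where f: "f = Cmp C t h" and h: "h \<in> hom C (Dom C h) (Dom C t)"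
      by (elim gen_sieve_singletonE)
    show "x f \<in> hom C (Dom C f) W"
      using Cmp_in_hom[OF h c] Cmp_in_hom[OF h th] x[OF h] f by (simp add: hom_def)
    fix k assume "k \<in> Ar C" "Cod C k = Dom C f"
    then have k: "k \<in> hom C (Dom C k) (Dom C h)" using Cmp_in_hom[OF h th] f by (simp add: hom_def)
    have hk: "Cmp C h k \<in> hom C (Dom C k) (Dom C t)" using Cmp_in_hom[OF k h] .
    have "x (Cmp C f k) = x (Cmp C t (Cmp C h k))" using f Cmp_assoc[OF k h th] by simp
    also have "\<dots> = Cmp C c (Cmp C h k)" using x hk by (simp add: hom_def)
    also have "\<dots> = Cmp C (x f) k" using Cmp_assoc[OF k h c] x[OF h] f by simp
    finally show "x (Cmp C f k) = Cmp C (x f) k" .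
  qed
  then obtain g where g: "g \<in> hom C ?U W" "\<forall>f\<in>?S. Cmp C g f = x f" by blast
  have i: "Idt C (Dom C t) \<in> hom C (Dom C t) (Dom C t)" using Idt_in_hom Dom_in_Ob th by (simp add: hom_def)
  then have "Cmp C t (Idt C (Dom C t)) \<in> ?S" unfolding gen_sieve_singleton_iff by (auto simp: hom_def)
  then have "Cmp C g (Cmp C t (Idt C (Dom C t))) = Cmp C c (Idt C (Dom C t))"
    using g(2) x[of "Idt C (Dom C t)"] i by (auto simp: hom_def)
  then show ?thesis using g(1) Cmp_Idt_right[OF th] Cmp_Idt_right[OF c] by auto
qed

section \<open>Descent along level maps of covering morphisms\<close>

lemma level_map_restrict:
  assumes V: "pro_diagram C V" and U: "pro_diagram C U" and t: "level_map C V U t"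
    and d: "d \<in> hom C (pF U k) Z" and u: "u \<in> hom (pI V) m k"
  shows "Cmp C (Cmp C d (t k)) (pFa V u) = Cmp C (Cmp C d (pFa U u)) (t m)"
proof -
  have m: "m \<in> Ob (pI V)" and k: "k \<in> Ob (pI V)" using index_hom_in_Ob[OF V u] by auto
  have Uu: "pFa U u \<in> hom C (pF U m) (pF U k)" using pro_diagram_hom[OF U] u level_map_index[OF t] by simp
  show ?thesis
    using Cmp_assoc[OF pro_diagram_hom[OF V u] level_map_hom[OF t k] d]
      Cmp_assoc[OF level_map_hom[OF t m] Uu d] level_map_natural[OF t u] by simp
qed

lemma level_map_reflects_peqv:
  assumes V: "pro_diagram C V" and U: "pro_diagram C U" and t: "level_map C V U t"
    and sc: "subcanonical C J" and cov: "\<forall>i\<in>Ob (pI V). covering_morphism C J (t i)"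
    and d: "d \<in> hom C (pF U k) Z" and d': "d' \<in> hom C (pF U k') Z"
    and e: "peqv C V (k, Cmp C d (t k)) (k', Cmp C d' (t k'))"
  shows "peqv C U (k, d) (k', d')"
proof -
  have I: "pI V = pI U" using level_map_index[OF t] .
  obtain m u v where u: "u \<in> hom (pI V) m k" and v: "v \<in> hom (pI V) m k'"
    and e1: "Cmp C (Cmp C d (t k)) (pFa V u) = Cmp C (Cmp C d' (t k')) (pFa V v)"
    using e unfolding peqv_def by auto
  have m: "m \<in> Ob (pI V)" using index_hom_in_Ob[OF V u] by auto
  have "Cod C (t m) = pF U m"
    and "Cmp C d (pFa U u) \<in> hom C (pF U m) Z" and "Cmp C d' (pFa U v) \<in> hom C (pF U m) Z"
    using level_map_hom[OF t m] Cmp_in_hom[OF pro_diagram_hom[OF U] d] Cmp_in_hom[OF pro_diagram_hom[OF U] d'] u v I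
    by (auto simp: hom_def)
  moreover have "Cmp C (Cmp C d (pFa U u)) (t m) = Cmp C (Cmp C d' (pFa U v)) (t m)"
    using e1 level_map_restrict[OF V U t d u] level_map_restrict[OF V U t d' v] by simp
  ultimately have "Cmp C d (pFa U u) = Cmp C d' (pFa U v)"
    using covering_morphism_epi[OF sc bspec[OF cov m]] by simp
  then show ?thesis unfolding peqv_def using u v I by auto
qed

lemma level_map_preserves_peqv:
  assumes V: "pro_diagram C V" and U: "pro_diagram C U" and t: "level_map C V U t"
    and d: "d \<in> hom C (pF U k) Z" and d': "d' \<in> hom C (pF U k') Z"
    and e: "peqv C U (k, d) (k', d')"
  shows "peqv C V (k, Cmp C d (t k)) (k', Cmp C d' (t k'))"
proof -
  have I: "pI V = pI U" using level_map_index[OF t] .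
  obtain m u v where u: "u \<in> hom (pI V) m k" and v: "v \<in> hom (pI V) m k'"
    and "Cmp C d (pFa U u) = Cmp C d' (pFa U v)"
    using e I unfolding peqv_def by auto
  then have "Cmp C (Cmp C d (t k)) (pFa V u) = Cmp C (Cmp C d' (t k')) (pFa V v)"
    using level_map_restrict[OF V U t d u] level_map_restrict[OF V U t d' v] by simp
  then show ?thesis unfolding peqv_def using u v by auto
qed

lemma plevel_covering_cancel:
  assumes V: "pro_diagram C V" and U: "pro_diagram C U" and W: "pro_diagram C W" and t: "level_map C V U t"
    and sc: "subcanonical C J" and cov: "\<forall>i\<in>Ob (pI V). covering_morphism C J (t i)"
    and g: "pro_mor C U W g" and g': "pro_mor C U W g'"
    and e: "pcomp C V U W g (plevel C V U t) = pcomp C V U W g' (plevel C V U t)"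
  shows "g = g'"
proof (rule pro_mor_eqI[OF U g g'])
  have I: "pI V = pI U" using level_map_index[OF t] .
  have T: "pro_mor C V U (plevel C V U t)" using plevel_pro_mor[OF V U t] .
  fix j assume j: "j \<in> Ob (pI W)"
  obtain a where a: "a \<in> g j" using pro_mor_memE[OF U g j] by blast
  obtain a' where a': "a' \<in> g' j" using pro_mor_memE[OF U g' j] by blast
  have ar: "pro_rep C U (pF W j) a" using pro_mor_memD[OF g a] by auto
  have ar': "pro_rep C U (pF W j) a'" using pro_mor_memD[OF g' a'] by auto
  have fa: "fst a \<in> Ob (pI U)" and sa: "snd a \<in> hom C (pF U (fst a)) (pF W j)" using ar by (auto simp: pro_rep_def)
  have fa': "fst a' \<in> Ob (pI U)" and sa': "snd a' \<in> hom C (pF U (fst a')) (pF W j)" using ar' by (auto simp: pro_rep_def)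
  have m1: "(fst a, Cmp C (snd a) (t (fst a))) \<in> pcomp C V U W g (plevel C V U t) j"
    using pcomp_memI[OF V U W g T a plevel_memI[OF V t fa]] by simp
  have m2: "(fst a', Cmp C (snd a') (t (fst a'))) \<in> pcomp C V U W g (plevel C V U t) j"
    using pcomp_memI[OF V U W g' T a' plevel_memI[OF V t fa']] e by simp
  have "peqv C V (fst a, Cmp C (snd a) (t (fst a))) (fst a', Cmp C (snd a') (t (fst a')))"
    using pro_mor_peqv[OF V pcomp_pro_mor[OF V U W g T] m1 m2] .
  then have "peqv C U (fst a, snd a) (fst a', snd a')"
    using level_map_reflects_peqv[OF V U t sc cov sa sa'] by simp
  then have "a' \<in> g j" using pro_mor_mem_iff[OF U g a] ar' by simp
  then show "\<exists>p. p \<in> g j \<and> p \<in> g' j" using a' by blast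
qed

lemma peqv_same_index:
  assumes X: "pro_diagram C X" and a: "a \<in> hom C (pF X i) Z" and b: "b \<in> hom C (pF X i) Z"
    and e: "peqv C X (i, a) (i, b)"
  obtains n z where "z \<in> hom (pI X) n i" and "Cmp C a (pFa X z) = Cmp C b (pFa X z)"
proof -
  interpret I: small_category "pI X" using pro_diagram_index[OF X] .
  obtain m u v where u: "u \<in> hom (pI X) m i" and v: "v \<in> hom (pI X) m i"
    and eu: "Cmp C a (pFa X u) = Cmp C b (pFa X v)"
    using e unfolding peqv_def by auto
  obtain n w where w: "w \<in> hom (pI X) n m" and ew: "Cmp (pI X) u w = Cmp (pI X) v w"
    using pro_diagram_equalize[OF X u v] by blast
  have "Cmp C a (pFa X (Cmp (pI X) u w)) = Cmp C (Cmp C a (pFa X u)) (pFa X w)"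
    using pro_diagram_Cmp_restrict[OF X a u w] by simp
  also have "\<dots> = Cmp C b (pFa X (Cmp (pI X) v w))"
    using eu pro_diagram_Cmp_restrict[OF X b v w] by simp
  finally show ?thesis using that[OF I.Cmp_in_hom[OF w u]] ew by simp
qed

lemma pro_mor_kernel_pair_rep:
  assumes V: "pro_diagram C V" and W: "pro_diagram C W" and Q: "pro_diagram C Q"
    and q1: "level_map C Q V q1" and q2: "level_map C Q V q2" and h: "pro_mor C V W h"
    and e: "pcomp C Q V W h (plevel C Q V q1) = pcomp C Q V W h (plevel C Q V q2)"
    and j: "j \<in> Ob (pI W)"
  shows "\<exists>k c. (k, c) \<in> h j \<and> Cmp C c (q1 k) = Cmp C c (q2 k)"
proof -
  have IQ: "pI Q = pI V" using level_map_index[OF q1] .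
  have Q1: "pro_mor C Q V (plevel C Q V q1)" using plevel_pro_mor[OF Q V q1] .
  obtain p where p: "p \<in> h j" using pro_mor_memE[OF V h j] by blast
  obtain i b where pib: "p = (i, b)" by fastforce
  have pp: "pro_rep C V (pF W j) p" using pro_mor_memD[OF h p] by auto
  have i: "i \<in> Ob (pI Q)" and b: "b \<in> hom C (pF V i) (pF W j)" using pp pib IQ by (auto simp: pro_rep_def)
  have q1i: "q1 i \<in> hom C (pF Q i) (pF V i)" and q2i: "q2 i \<in> hom C (pF Q i) (pF V i)"
    using level_map_hom[OF q1 i] level_map_hom[OF q2 i] .
  have "(i, Cmp C b (q1 i)) \<in> pcomp C Q V W h (plevel C Q V q1) j"
    and "(i, Cmp C b (q2 i)) \<in> pcomp C Q V W h (plevel C Q V q1) j"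
    using pcomp_memI[OF Q V W h plevel_pro_mor[OF Q V q1] p] pcomp_memI[OF Q V W h plevel_pro_mor[OF Q V q2] p]
      plevel_memI[OF Q q1] plevel_memI[OF Q q2] i IQ pib e by auto
  then have "peqv C Q (i, Cmp C b (q1 i)) (i, Cmp C b (q2 i))"
    using pro_mor_peqv[OF Q pcomp_pro_mor[OF Q V W h Q1]] by blast
  then obtain n z where z: "z \<in> hom (pI Q) n i"
    and ez: "Cmp C (Cmp C b (q1 i)) (pFa Q z) = Cmp C (Cmp C b (q2 i)) (pFa Q z)"
    using peqv_same_index[OF Q Cmp_in_hom[OF q1i b] Cmp_in_hom[OF q2i b]] by blast
  have zV: "z \<in> hom (pI V) n i" and n: "n \<in> Ob (pI Q)" using z IQ index_hom_in_Ob[OF Q z] by auto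
  have Vz: "pFa V z \<in> hom C (pF V n) (pF V i)" using pro_diagram_hom[OF V zV] .
  have "Cmp C (Cmp C b (pFa V z)) (q n) = Cmp C (Cmp C b (q i)) (pFa Q z)"
    if q: "level_map C Q V q" for q
    using Cmp_assoc[OF level_map_hom[OF q n] Vz b] Cmp_assoc[OF pro_diagram_hom[OF Q z] level_map_hom[OF q i] b]
      level_map_natural[OF q z] by simp
  from this[OF q1] this[OF q2] ez
  have "Cmp C (Cmp C b (pFa V z)) (q1 n) = Cmp C (Cmp C b (pFa V z)) (q2 n)" by simp
  moreover have "(n, Cmp C b (pFa V z)) \<in> h j"
    using pro_mor_mem_iff[OF V h p] peqv_restrict[OF V pp, of z n] zV pib by simp
  ultimately show ?thesis by blast
qed

end

definition pdescend :: "('o,'a) cat \<Rightarrow> ('i,'o,'a) proobj \<Rightarrow> ('i,'o,'a) proobj \<Rightarrow> ('i \<Rightarrow> 'a) \<Rightarrow>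
    ('i \<Rightarrow> ('i \<times> 'a) set) \<Rightarrow> ('i \<Rightarrow> ('i \<times> 'a) set)" where
  "pdescend C U W t h j = (if j \<in> Ob (pI W)
     then {x. pro_rep C U (pF W j) x \<and> (fst x, Cmp C (snd x) (t (fst x))) \<in> h j} else {})"

context small_category begin

lemma pdescend_class:
  assumes V: "pro_diagram C V" and U: "pro_diagram C U" and t: "level_map C V U t"
    and sc: "subcanonical C J" and cov: "\<forall>i\<in>Ob (pI V). covering_morphism C J (t i)"
    and h: "pro_mor C V W h" and j: "j \<in> Ob (pI W)"
    and d: "d \<in> hom C (pF U k) (pF W j)" and kd: "(k, Cmp C d (t k)) \<in> h j"
  shows "pdescend C U W t h j = pcls C U W j (k, d)"
proof (intro set_eqI iffI)
  fix x assume "x \<in> pdescend C U W t h j"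
  then have xr: "pro_rep C U (pF W j) x" and xh: "(fst x, Cmp C (snd x) (t (fst x))) \<in> h j"
    using j by (auto simp: pdescend_def)
  have "snd x \<in> hom C (pF U (fst x)) (pF W j)" using xr by (simp add: pro_rep_def)
  then have "peqv C U (k, d) (fst x, snd x)"
    using level_map_reflects_peqv[OF V U t sc cov d] pro_mor_peqv[OF V h kd xh] by blast
  then show "x \<in> pcls C U W j (k, d)" using xr by (simp add: mem_pcls_iff)
next
  fix x assume "x \<in> pcls C U W j (k, d)"
  then have xr: "pro_rep C U (pF W j) x" and ex: "peqv C U (k, d) x" by (auto simp: mem_pcls_iff)
  have fx: "fst x \<in> Ob (pI V)" and sx: "snd x \<in> hom C (pF U (fst x)) (pF W j)"
    using xr level_map_index[OF t] by (auto simp: pro_rep_def)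
  have "peqv C V (k, Cmp C d (t k)) (fst x, Cmp C (snd x) (t (fst x)))"
    using level_map_preserves_peqv[OF V U t d sx] ex by simp
  moreover have "pro_rep C V (pF W j) (fst x, Cmp C (snd x) (t (fst x)))"
    using fx Cmp_in_hom[OF level_map_hom[OF t fx] sx] by (simp add: pro_rep_def)
  ultimately show "x \<in> pdescend C U W t h j"
    using pro_mor_mem_iff[OF V h kd] xr j by (simp add: pdescend_def)
qed

lemma pdescend_pro_mor:
  assumes V: "pro_diagram C V" and U: "pro_diagram C U" and W: "pro_diagram C W" and t: "level_map C V U t"
    and sc: "subcanonical C J" and cov: "\<forall>i\<in>Ob (pI V). covering_morphism C J (t i)"
    and h: "pro_mor C V W h"
    and D: "\<And>j. j \<in> Ob (pI W) \<Longrightarrow>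
      \<exists>k d. k \<in> Ob (pI V) \<and> d \<in> hom C (pF U k) (pF W j) \<and> (k, Cmp C d (t k)) \<in> h j"
  shows "pro_mor C U W (pdescend C U W t h)"
  unfolding pro_mor_def prep_eq_pro_rep
proof (intro conjI ballI allI impI)
  fix j assume j: "j \<in> Ob (pI W)"
  then obtain k d where k: "k \<in> Ob (pI V)" and d: "d \<in> hom C (pF U k) (pF W j)"
    and kd: "(k, Cmp C d (t k)) \<in> h j"
    using D by blast
  then show "\<exists>p. pro_rep C U (pF W j) p \<and> pdescend C U W t h j = pcls C U W j p"
    using pdescend_class[OF V U t sc cov h j d kd] level_map_index[OF t] by (auto simp: pro_rep_def)
next
  fix j assume "j \<notin> Ob (pI W)" then show "pdescend C U W t h j = {}" by (simp add: pdescend_def)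
next
  fix v p assume v: "v \<in> Ar (pI W)" and p: "p \<in> pdescend C U W t h (Dom (pI W) v)"
  interpret IW: small_category "pI W" using pro_diagram_index[OF W] .
  define a where "a = Dom (pI W) v"
  define b where "b = Cod (pI W) v"
  have vh: "v \<in> hom (pI W) a b" using v by (simp add: hom_def a_def b_def)
  have Fv: "pFa W v \<in> hom C (pF W a) (pF W b)" using pro_diagram_hom[OF W vh] .
  have pr: "pro_rep C U (pF W a) p" and ph: "(fst p, Cmp C (snd p) (t (fst p))) \<in> h a"
    using p by (auto simp: pdescend_def a_def split: if_splits)
  have fp: "fst p \<in> Ob (pI V)" and sp: "snd p \<in> hom C (pF U (fst p)) (pF W a)"
    using pr level_map_index[OF t] by (auto simp: pro_rep_def)
  have "(fst p, Cmp C (Cmp C (pFa W v) (snd p)) (t (fst p))) \<in> h b"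
    using pro_mor_transition[OF h vh ph] Cmp_assoc[OF level_map_hom[OF t fp] sp Fv] by simp
  moreover have "pro_rep C U (pF W b) (fst p, Cmp C (pFa W v) (snd p))"
    using pr Cmp_in_hom[OF sp Fv] by (simp add: pro_rep_def)
  ultimately show "(fst p, Cmp C (pFa W v) (snd p)) \<in> pdescend C U W t h (Cod (pI W) v)"
    using index_hom_in_Ob[OF W vh] by (simp add: pdescend_def b_def)
qed

lemma pcomp_pdescend:
  assumes V: "pro_diagram C V" and U: "pro_diagram C U" and W: "pro_diagram C W" and t: "level_map C V U t"
    and g: "pro_mor C U W (pdescend C U W t h)" and h: "pro_mor C V W h"
    and D: "\<And>j. j \<in> Ob (pI W) \<Longrightarrow>
      \<exists>k d. k \<in> Ob (pI V) \<and> d \<in> hom C (pF U k) (pF W j) \<and> (k, Cmp C d (t k)) \<in> h j"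
  shows "pcomp C V U W (pdescend C U W t h) (plevel C V U t) = h"
proof (rule pro_mor_eqI[OF V pcomp_pro_mor[OF V U W g plevel_pro_mor[OF V U t]] h])
  fix j assume j: "j \<in> Ob (pI W)"
  then obtain k d where k: "k \<in> Ob (pI V)" and d: "d \<in> hom C (pF U k) (pF W j)"
    and kd: "(k, Cmp C d (t k)) \<in> h j"
    using D by blast
  have "(k, d) \<in> pdescend C U W t h j" using j k d kd level_map_index[OF t] by (simp add: pdescend_def pro_rep_def)
  then have "(k, Cmp C d (t k)) \<in> pcomp C V U W (pdescend C U W t h) (plevel C V U t) j"
    using pcomp_memI[OF V U W g plevel_pro_mor[OF V U t]] plevel_memI[OF V t] k level_map_index[OF t]
    by fastforce
  then show "\<exists>p. p \<in> pcomp C V U W (pdescend C U W t h) (plevel C V U t) j \<and> p \<in> h j" using kd by blast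
qed

lemma plevel_covering_descent:
  assumes V: "pro_diagram C V" and U: "pro_diagram C U" and W: "pro_diagram C W" and Q: "pro_diagram C Q"
    and t: "level_map C V U t" and sc: "subcanonical C J" and cov: "\<forall>i\<in>Ob (pI V). covering_morphism C J (t i)"
    and q1: "level_map C Q V q1" and q2: "level_map C Q V q2"
    and pb: "\<forall>i\<in>Ob (pI V). is_pullback C (t i) (t i) (pF Q i) (q1 i) (q2 i)"
    and h: "pro_mor C V W h"
    and e: "pcomp C Q V W h (plevel C Q V q1) = pcomp C Q V W h (plevel C Q V q2)"
  shows "\<exists>g. pro_mor C U W g \<and> pcomp C V U W g (plevel C V U t) = h"
proof -
  have D: "\<exists>k d. k \<in> Ob (pI V) \<and> d \<in> hom C (pF U k) (pF W j) \<and> (k, Cmp C d (t k)) \<in> h j"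
    if j: "j \<in> Ob (pI W)" for j
  proof -
    obtain k c where kc: "(k, c) \<in> h j" and ec: "Cmp C c (q1 k) = Cmp C c (q2 k)"
      using pro_mor_kernel_pair_rep[OF V W Q q1 q2 h e j] by blast
    have k: "k \<in> Ob (pI V)" and c: "c \<in> hom C (pF V k) (pF W j)"
      using pro_mor_memD[OF h kc] by (auto simp: pro_rep_def)
    have tk: "t k \<in> hom C (pF V k) (pF U k)" using level_map_hom[OF t k] .
    obtain d where "d \<in> hom C (Cod C (t k)) (pF W j)" "Cmp C d (t k) = c"
      using covering_morphism_descent[OF sc bspec[OF cov k] bspec[OF pb k], of c "pF W j"] c tk ec
      by (auto simp: hom_def)
    then show ?thesis using k kc tk by (auto simp: hom_def)
  qed
  show ?thesis
    using pdescend_pro_mor[OF V U W t sc cov h D] pcomp_pdescend[OF V U W t _ h D] by blast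
qed

section \<open>Levelwise kernel pairs\<close>

context
  fixes V U :: "('i,'o,'a) proobj" and t q1 q2 :: "'i \<Rightarrow> 'a" and Qo :: "'i \<Rightarrow> 'o"
  assumes V: "pro_diagram C V" and U: "pro_diagram C U" and t: "level_map C V U t"
    and pb: "\<And>i. i \<in> Ob (pI V) \<Longrightarrow> is_pullback C (t i) (t i) (Qo i) (q1 i) (q2 i)"
begin

lemma kernel_pair_legs:
  assumes i: "i \<in> Ob (pI V)"
  shows "q1 i \<in> hom C (Qo i) (pF V i)" and "q2 i \<in> hom C (Qo i) (pF V i)"
    and "Cmp C (t i) (q1 i) = Cmp C (t i) (q2 i)" and "Qo i \<in> Ob C"
proof -
  show q1: "q1 i \<in> hom C (Qo i) (pF V i)" and "q2 i \<in> hom C (Qo i) (pF V i)"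
    and "Cmp C (t i) (q1 i) = Cmp C (t i) (q2 i)"
    using pb[OF i] level_map_hom[OF t i] unfolding is_pullback_def by (auto simp: hom_def)
  show "Qo i \<in> Ob C" using q1 Dom_in_Ob[of "q1 i"] by (simp add: hom_def)
qed

lemma kernel_pair_transition_ex1:
  assumes u: "u \<in> hom (pI V) a c"
  shows "\<exists>!h. h \<in> hom C (Qo a) (Qo c) \<and>
    Cmp C (q1 c) h = Cmp C (pFa V u) (q1 a) \<and> Cmp C (q2 c) h = Cmp C (pFa V u) (q2 a)"
proof -
  have a: "a \<in> Ob (pI V)" and c: "c \<in> Ob (pI V)" using index_hom_in_Ob[OF V u] by auto
  have I: "pI V = pI U" using level_map_index[OF t] .
  have Vu: "pFa V u \<in> hom C (pF V a) (pF V c)" using pro_diagram_hom[OF V u] .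
  have Uu: "pFa U u \<in> hom C (pF U a) (pF U c)" using pro_diagram_hom[OF U] u I by simp
  have ta: "t a \<in> hom C (pF V a) (pF U a)" and tc: "t c \<in> hom C (pF V c) (pF U c)"
    using level_map_hom[OF t a] level_map_hom[OF t c] .
  note legs = kernel_pair_legs[OF a]
  have "Cmp C (t c) (Cmp C (pFa V u) x) = Cmp C (pFa U u) (Cmp C (t a) x)"
    if "x \<in> hom C (Qo a) (pF V a)" for x
    using Cmp_assoc[OF that Vu tc] Cmp_assoc[OF that ta Uu] level_map_natural[OF t u] by simp
  from this[OF legs(1)] this[OF legs(2)] legs(3)
  have e: "Cmp C (t c) (Cmp C (pFa V u) (q1 a)) = Cmp C (t c) (Cmp C (pFa V u) (q2 a))" by simp
  have "Cmp C (pFa V u) (q1 a) \<in> hom C (Qo a) (Dom C (t c))"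
    and "Cmp C (pFa V u) (q2 a) \<in> hom C (Qo a) (Dom C (t c))"
    using Cmp_in_hom[OF legs(1) Vu] Cmp_in_hom[OF legs(2) Vu] tc by (simp_all add: hom_def)
  from is_pullback_ex1[OF pb[OF c] legs(4) this e] show ?thesis .
qed

definition kernel_pair_transition :: "'i \<Rightarrow> 'a" where
  "kernel_pair_transition u = (THE h. h \<in> hom C (Qo (Dom (pI V) u)) (Qo (Cod (pI V) u)) \<and>
      Cmp C (q1 (Cod (pI V) u)) h = Cmp C (pFa V u) (q1 (Dom (pI V) u)) \<and>
      Cmp C (q2 (Cod (pI V) u)) h = Cmp C (pFa V u) (q2 (Dom (pI V) u)))"

lemma kernel_pair_transition:
  assumes u: "u \<in> hom (pI V) a c"
  shows "kernel_pair_transition u \<in> hom C (Qo a) (Qo c)"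
    and "Cmp C (q1 c) (kernel_pair_transition u) = Cmp C (pFa V u) (q1 a)"
    and "Cmp C (q2 c) (kernel_pair_transition u) = Cmp C (pFa V u) (q2 a)"
  using theI'[OF kernel_pair_transition_ex1[OF u]] u
  unfolding kernel_pair_transition_def by (simp_all add: hom_def)

lemma kernel_pair_transition_unique:
  assumes u: "u \<in> hom (pI V) a c" and "h \<in> hom C (Qo a) (Qo c)"
    and "Cmp C (q1 c) h = Cmp C (pFa V u) (q1 a)" and "Cmp C (q2 c) h = Cmp C (pFa V u) (q2 a)"
  shows "kernel_pair_transition u = h"
  using kernel_pair_transition_ex1[OF u] kernel_pair_transition[OF u] assms(2-4)
  by (metis (no_types, lifting))

lemma kernel_pair_transition_Idt:
  assumes i: "i \<in> Ob (pI V)"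
  shows "kernel_pair_transition (Idt (pI V) i) = Idt C (Qo i)"
proof -
  interpret I: small_category "pI V" using pro_diagram_index[OF V] .
  show ?thesis
    using kernel_pair_transition_unique[OF I.Idt_in_hom[OF i] Idt_in_hom[OF kernel_pair_legs(4)[OF i]]]
      kernel_pair_legs(1,2)[OF i] Cmp_Idt_left Cmp_Idt_right pro_diagram_Idt[OF V i] by simp
qed

lemma kernel_pair_transition_Cmp:
  assumes u: "u \<in> hom (pI V) a b" and v: "v \<in> hom (pI V) b c"
  shows "kernel_pair_transition (Cmp (pI V) v u) = Cmp C (kernel_pair_transition v) (kernel_pair_transition u)"
proof -
  interpret I: small_category "pI V" using pro_diagram_index[OF V] .
  have a: "a \<in> Ob (pI V)" and b: "b \<in> Ob (pI V)" and c: "c \<in> Ob (pI V)"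
    using index_hom_in_Ob[OF V u] index_hom_in_Ob[OF V v] by auto
  note Qu = kernel_pair_transition[OF u] and Qv = kernel_pair_transition[OF v]
  have comp: "Cmp C (x c) (Cmp C (kernel_pair_transition v) (kernel_pair_transition u))
      = Cmp C (pFa V (Cmp (pI V) v u)) (x a)"
    if x: "\<And>i. i \<in> Ob (pI V) \<Longrightarrow> x i \<in> hom C (Qo i) (pF V i)"
      and xu: "Cmp C (x b) (kernel_pair_transition u) = Cmp C (pFa V u) (x a)"
      and xv: "Cmp C (x c) (kernel_pair_transition v) = Cmp C (pFa V v) (x b)"
    for x
    using Cmp_assoc[OF Qu(1) Qv(1) x[OF c]] Cmp_assoc[OF Qu(1) x[OF b] pro_diagram_hom[OF V v]]
      Cmp_assoc[OF x[OF a] pro_diagram_hom[OF V u] pro_diagram_hom[OF V v]]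
      pro_diagram_Cmp[OF V u v] xu xv by simp
  show ?thesis
    by (rule kernel_pair_transition_unique[OF I.Cmp_in_hom[OF u v] Cmp_in_hom[OF Qu(1) Qv(1)]])
      (use comp[OF kernel_pair_legs(1)] comp[OF kernel_pair_legs(2)] Qu Qv in simp_all)
qed

lemma kernel_pair_diagram:
  shows "is_functor (pI V) C Qo kernel_pair_transition"
    and "level_map C (pI V, Qo, kernel_pair_transition) V q1"
    and "level_map C (pI V, Qo, kernel_pair_transition) V q2"
proof -
  show "is_functor (pI V) C Qo kernel_pair_transition"
    unfolding is_functor_def
  proof (intro conjI ballI impI)
    fix u assume u: "u \<in> Ar (pI V)"
    then show "kernel_pair_transition u \<in> hom C (Qo (Dom (pI V) u)) (Qo (Cod (pI V) u))"
      using kernel_pair_transition(1)[of u] by (simp add: hom_def)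
    fix v assume "v \<in> Ar (pI V)" and "Cod (pI V) u = Dom (pI V) v"
    then show "kernel_pair_transition (Cmp (pI V) v u)
        = Cmp C (kernel_pair_transition v) (kernel_pair_transition u)"
      using u kernel_pair_transition_Cmp[of u _ "Cod (pI V) u" v] by (simp add: hom_def)
  qed (use kernel_pair_legs(4) kernel_pair_transition_Idt in auto)
  show "level_map C (pI V, Qo, kernel_pair_transition) V q1"
    and "level_map C (pI V, Qo, kernel_pair_transition) V q2"
    unfolding level_map_def using kernel_pair_legs(1,2) kernel_pair_transition(2,3)
    by (simp_all add: hom_def)
qed

end

lemma levelwise_kernel_pair:
  assumes fl: "has_finite_limits C" and V: "pro_obj C A V" and U: "pro_diagram C U"
    and t: "level_map C V U t"
  obtains Q q1 q2 where "pro_obj C A Q"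
    and "level_map C Q V q1" and "level_map C Q V q2"
    and "\<forall>i\<in>Ob (pI V). is_pullback C (t i) (t i) (pF Q i) (q1 i) (q2 i)"
proof -
  have "\<forall>i\<in>Ob (pI V). \<exists>x. is_pullback C (t i) (t i) (fst x) (fst (snd x)) (snd (snd x))"
  proof
    fix i assume "i \<in> Ob (pI V)"
    then have "t i \<in> Ar C" using level_map_hom[OF t] by (simp add: hom_def)
    then obtain P p q where "is_pullback C (t i) (t i) P p q"
      using fl unfolding has_finite_limits_def by blast
    then show "\<exists>x. is_pullback C (t i) (t i) (fst x) (fst (snd x)) (snd (snd x))"
      by (intro exI[of _ "(P, p, q)"]) simp
  qed
  then obtain x where pb: "\<And>i. i \<in> Ob (pI V) \<Longrightarrow>
      is_pullback C (t i) (t i) (fst (x i)) (fst (snd (x i))) (snd (snd (x i)))"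
    by (metis bchoice)
  obtain Qa where F: "is_functor (pI V) C (\<lambda>i. fst (x i)) Qa"
    and q: "level_map C (pI V, \<lambda>i. fst (x i), Qa) V (\<lambda>i. fst (snd (x i)))"
      "level_map C (pI V, \<lambda>i. fst (x i), Qa) V (\<lambda>i. snd (snd (x i)))"
    using kernel_pair_diagram[OF pro_obj_pro_diagram[OF V] U t pb] by blast
  have "pro_obj C A (pI V, \<lambda>i. fst (x i), Qa)" using V F by (simp add: pro_obj_def)
  then show ?thesis using that q pb by simp
qed

section \<open>Level presentations of pro-covering morphisms\<close>

lemma pcomp_coequalizes:
  assumes X: "pro_diagram C X" and Y: "pro_diagram C Y" and Z: "pro_diagram C Z" and W: "pro_diagram C W"
    and f: "pro_mor C Y Z f" and p1: "pro_mor C X Y p1" and p2: "pro_mor C X Y p2"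
    and g: "pro_mor C Z W g" and e: "pcomp C X Y Z f p1 = pcomp C X Y Z f p2"
  shows "pcomp C X Y W (pcomp C Y Z W g f) p1 = pcomp C X Y W (pcomp C Y Z W g f) p2"
  using pcomp_assoc[OF X Y Z W g f p1] pcomp_assoc[OF X Y Z W g f p2] e by simp

lemma pcomp_cancel_split_epi:
  assumes X: "pro_diagram C X" and Y: "pro_diagram C Y" and W: "pro_diagram C W"
    and \<theta>: "pro_mor C X Y \<theta>" and \<psi>: "pro_mor C Y X \<psi>" and inv: "pcomp C Y X Y \<theta> \<psi> = pid C Y"
    and a: "pro_mor C Y W a" and b: "pro_mor C Y W b" and e: "pcomp C X Y W a \<theta> = pcomp C X Y W b \<theta>"
  shows "a = b"
proof -
  have "a = pcomp C Y X W (pcomp C X Y W a \<theta>) \<psi>"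
    using pcomp_assoc[OF Y X Y W a \<theta> \<psi>] inv pcomp_pid_right[OF Y W a] by simp
  also have "\<dots> = b"
    using e pcomp_assoc[OF Y X Y W b \<theta> \<psi>] inv pcomp_pid_right[OF Y W b] by simp
  finally show ?thesis .
qed

lemma pcomp_plevel_eqI:
  assumes X: "pro_diagram C X" and Y: "pro_diagram C Y" and Z: "pro_diagram C Z"
    and s1: "level_map C X Y s1" and s2: "level_map C X Y s2" and t: "level_map C Y Z t"
    and e: "\<And>i. i \<in> Ob (pI Y) \<Longrightarrow> Cmp C (t i) (s1 i) = Cmp C (t i) (s2 i)"
  shows "pcomp C X Y Z (plevel C Y Z t) (plevel C X Y s1) = pcomp C X Y Z (plevel C Y Z t) (plevel C X Y s2)"
proof (rule pro_mor_eqI[OF X])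
  note T = plevel_pro_mor[OF Y Z t]
  show "pro_mor C X Z (pcomp C X Y Z (plevel C Y Z t) (plevel C X Y s1))"
    and "pro_mor C X Z (pcomp C X Y Z (plevel C Y Z t) (plevel C X Y s2))"
    using pcomp_pro_mor[OF X Y Z T plevel_pro_mor[OF X Y s1]]
      pcomp_pro_mor[OF X Y Z T plevel_pro_mor[OF X Y s2]] .
  fix i assume "i \<in> Ob (pI Z)"
  then have i: "i \<in> Ob (pI Y)" and ti: "(i, t i) \<in> plevel C Y Z t i"
    using level_map_index[OF t] plevel_memI[OF Y t] by auto
  have "(i, Cmp C (t i) (s i)) \<in> pcomp C X Y Z (plevel C Y Z t) (plevel C X Y s) i"
    if "level_map C X Y s" for s
    using pcomp_memI[OF X Y Z T plevel_pro_mor[OF X Y that] ti] plevel_memI[OF X that i] by fastforce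
  from this[OF s1] this[OF s2] e[OF i]
  show "\<exists>p. p \<in> pcomp C X Y Z (plevel C Y Z t) (plevel C X Y s1) i \<and>
      p \<in> pcomp C X Y Z (plevel C Y Z t) (plevel C X Y s2) i" by auto
qed

end

lemma pro_pullback_liftE:
  assumes "pro_pullback C A V V' U f g P p q" and "pro_obj C A T"
    and "pro_mor C T V a" and "pro_mor C T V' b" and "pcomp C T V U f a = pcomp C T V' U g b"
  obtains m where "pro_mor C T P m" and "pcomp C T P V p m = a" and "pcomp C T P V' q m = b"
  using assms unfolding pro_pullback_def pmor_def by blast

locale pro_covering_presentation = small_category C for C :: "('o,'a) cat" +
  fixes J :: "'o \<Rightarrow> 'a set set" and A :: "'x set"
    and V U V' U' :: "('i,'o,'a) proobj" and t :: "'i \<Rightarrow> 'a"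
    and f \<theta>V \<psi>V \<theta>U \<psi>U :: "'i \<Rightarrow> ('i \<times> 'a) set"
  assumes subcanonical: "subcanonical C J"
    and V: "pro_diagram C V" and U: "pro_diagram C U"
    and V': "pro_obj C A V'" and U': "pro_obj C A U'"
    and t: "level_map C V' U' t" and t_covering: "\<forall>i\<in>Ob (pI V'). covering_morphism C J (t i)"
    and \<theta>V: "pro_mor C V V' \<theta>V" and \<psi>V: "pro_mor C V' V \<psi>V"
    and \<psi>V_\<theta>V: "pcomp C V V' V \<psi>V \<theta>V = pid C V" and \<theta>V_\<psi>V: "pcomp C V' V V' \<theta>V \<psi>V = pid C V'"
    and \<theta>U: "pro_mor C U U' \<theta>U" and \<psi>U: "pro_mor C U' U \<psi>U"
    and \<psi>U_\<theta>U: "pcomp C U U' U \<psi>U \<theta>U = pid C U" and \<theta>U_\<psi>U: "pcomp C U' U U' \<theta>U \<psi>U = pid C U'"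
    and f_eq: "f = pcomp C V U' U \<psi>U (pcomp C V V' U' (plevel C V' U' t) \<theta>V)"

context small_category begin

lemma pro_covering_presentationE:
  assumes V: "pro_diagram C V" and U: "pro_diagram C U" and sc: "subcanonical C J"
    and cov: "pro_covering C J A V U f"
  obtains V' U' t \<theta>V \<psi>V \<theta>U \<psi>U where "pro_covering_presentation C J A V U V' U' t f \<theta>V \<psi>V \<theta>U \<psi>U"
proof -
  have f: "pro_mor C V U f" using cov unfolding pro_covering_def by blast
  obtain V' U' t \<theta>V \<theta>U where V': "pro_obj C A V'" and U': "pro_obj C A U'" and I: "pI V' = pI U'"
    and th: "\<forall>i\<in>Ob (pI V'). t i \<in> hom C (pF V' i) (pF U' i) \<and> covering_morphism C J (t i)"
    and nat: "\<forall>u\<in>Ar (pI V'). Cmp C (pFa U' u) (t (Dom (pI V') u)) = Cmp C (t (Cod (pI V') u)) (pFa V' u)"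
    and isoV: "pro_iso C V V' \<theta>V" and isoU: "pro_iso C U U' \<theta>U"
    and H: "pcomp C V U U' \<theta>U f = pcomp C V V' U' (plevel C V' U' t) \<theta>V"
    using cov unfolding pro_covering_def by blast
  have t: "level_map C V' U' t" unfolding level_map_def using I th nat by auto
  obtain \<psi>V where \<psi>V: "pro_mor C V V' \<theta>V" "pro_mor C V' V \<psi>V"
    "pcomp C V V' V \<psi>V \<theta>V = pid C V" "pcomp C V' V V' \<theta>V \<psi>V = pid C V'"
    using isoV unfolding pro_iso_def by blast
  obtain \<psi>U where \<psi>U: "pro_mor C U U' \<theta>U" "pro_mor C U' U \<psi>U"
    "pcomp C U U' U \<psi>U \<theta>U = pid C U" "pcomp C U' U U' \<theta>U \<psi>U = pid C U'"
    using isoU unfolding pro_iso_def by blast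
  note U'd = pro_obj_pro_diagram[OF U']
  have "f = pcomp C V U U (pcomp C U U' U \<psi>U \<theta>U) f" using pcomp_pid_left[OF V U f] \<psi>U(3) by simp
  also have "\<dots> = pcomp C V U' U \<psi>U (pcomp C V V' U' (plevel C V' U' t) \<theta>V)"
    using pcomp_assoc[OF V U U'd U \<psi>U(2,1) f] H by simp
  finally have "f = pcomp C V U' U \<psi>U (pcomp C V V' U' (plevel C V' U' t) \<theta>V)" .
  then show ?thesis
    by (intro that, unfold_locales) (use category sc V U V' U' t th \<psi>V \<psi>U in auto)
qed

end

context pro_covering_presentation begin

abbreviation T :: "'i \<Rightarrow> ('i \<times> 'a) set" where "T \<equiv> plevel C V' U' t"

lemma V'_diagram: "pro_diagram C V'" and U'_diagram: "pro_diagram C U'"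
  using pro_obj_pro_diagram[OF V'] pro_obj_pro_diagram[OF U'] .

lemma T_pro_mor: "pro_mor C V' U' T"
  using plevel_pro_mor[OF V'_diagram U'_diagram t] .

lemma f_pro_mor: "pro_mor C V U f"
  unfolding f_eq using pcomp_pro_mor[OF V U'_diagram U \<psi>U pcomp_pro_mor[OF V V'_diagram U'_diagram T_pro_mor \<theta>V]] .

lemma pcomp_f_factor:
  assumes W: "pro_diagram C W" and g: "pro_mor C U W g"
  shows "pcomp C V U W g f = pcomp C V V' W (pcomp C V' U' W (pcomp C U' U W g \<psi>U) T) \<theta>V"
  unfolding f_eq
  using pcomp_assoc[OF V U'_diagram U W g \<psi>U pcomp_pro_mor[OF V V'_diagram U'_diagram T_pro_mor \<theta>V]]
    pcomp_assoc[OF V V'_diagram U'_diagram W pcomp_pro_mor[OF U'_diagram U W g \<psi>U] T_pro_mor \<theta>V]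
  by simp

lemma pcomp_f_\<psi>V: "pcomp C V' V U f \<psi>V = pcomp C V' U' U \<psi>U T"
proof -
  have "pcomp C V' V U f \<psi>V = pcomp C V' U' U \<psi>U (pcomp C V' V U' (pcomp C V V' U' T \<theta>V) \<psi>V)"
    unfolding f_eq
    using pcomp_assoc[OF V'_diagram V U'_diagram U \<psi>U pcomp_pro_mor[OF V V'_diagram U'_diagram T_pro_mor \<theta>V] \<psi>V]
    by simp
  also have "pcomp C V' V U' (pcomp C V V' U' T \<theta>V) \<psi>V = T"
    using pcomp_assoc[OF V'_diagram V V'_diagram U'_diagram T_pro_mor \<theta>V \<psi>V] \<theta>V_\<psi>V
      pcomp_pid_right[OF V'_diagram U'_diagram T_pro_mor] by simp
  finally show ?thesis .
qed

lemma precomp_f_inj: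
  assumes W: "pro_diagram C W" and g: "pro_mor C U W g" and g': "pro_mor C U W g'"
    and e: "pcomp C V U W g f = pcomp C V U W g' f"
  shows "g = g'"
proof -
  have G: "pro_mor C U' W (pcomp C U' U W g \<psi>U)" and G': "pro_mor C U' W (pcomp C U' U W g' \<psi>U)"
    using pcomp_pro_mor[OF U'_diagram U W g \<psi>U] pcomp_pro_mor[OF U'_diagram U W g' \<psi>U] .
  have "pcomp C V' U' W (pcomp C U' U W g \<psi>U) T = pcomp C V' U' W (pcomp C U' U W g' \<psi>U) T"
    using pcomp_cancel_split_epi[OF V V'_diagram W \<theta>V \<psi>V \<theta>V_\<psi>V
        pcomp_pro_mor[OF V'_diagram U'_diagram W G T_pro_mor] pcomp_pro_mor[OF V'_diagram U'_diagram W G' T_pro_mor]]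
      e pcomp_f_factor[OF W g] pcomp_f_factor[OF W g'] by simp
  then have "pcomp C U' U W g \<psi>U = pcomp C U' U W g' \<psi>U"
    using plevel_covering_cancel[OF V'_diagram U'_diagram W t subcanonical t_covering G G'] by simp
  then show ?thesis using pcomp_cancel_split_epi[OF U'_diagram U W \<psi>U \<theta>U \<psi>U_\<theta>U g g'] by simp
qed

lemma descends_along_T:
  assumes fl: "has_finite_limits C" and W: "pro_diagram C W"
    and pb: "pro_pullback C A V V U f f P p1 p2"
    and h: "pro_mor C V W h" and e: "pcomp C P V W h p1 = pcomp C P V W h p2"
  shows "\<exists>g'. pro_mor C U' W g' \<and> pcomp C V' U' W g' T = pcomp C V' V W h \<psi>V"
proof -
  obtain Q q1 q2 where QA: "pro_obj C A Q"
    and q1: "level_map C Q V' q1" and q2: "level_map C Q V' q2"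
    and Qpb: "\<forall>i\<in>Ob (pI V'). is_pullback C (t i) (t i) (pF Q i) (q1 i) (q2 i)"
    by (rule levelwise_kernel_pair[OF fl V' U'_diagram t])
  have Q: "pro_diagram C Q" using pro_obj_pro_diagram[OF QA] .
  have P: "pro_diagram C P" and p1: "pro_mor C P V p1" and p2: "pro_mor C P V p2"
    using pb pro_obj_pro_diagram[of C A P] unfolding pro_pullback_def by auto
  note Q1 = plevel_pro_mor[OF Q V'_diagram q1] and Q2 = plevel_pro_mor[OF Q V'_diagram q2]
  have TQ: "pcomp C Q V' U' T (plevel C Q V' q1) = pcomp C Q V' U' T (plevel C Q V' q2)"
    using pcomp_plevel_eqI[OF Q V'_diagram U'_diagram q1 q2 t] Qpb unfolding is_pullback_def by blast
  have f\<psi>V: "pcomp C Q V U f (pcomp C Q V' V \<psi>V Qk) = pcomp C Q U' U \<psi>U (pcomp C Q V' U' T Qk)"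
    if Qk: "pro_mor C Q V' Qk" for Qk
    using pcomp_assoc[OF Q V'_diagram V U f_pro_mor \<psi>V Qk] pcomp_f_\<psi>V
      pcomp_assoc[OF Q V'_diagram U'_diagram U \<psi>U T_pro_mor Qk] by simp
  have "pcomp C Q V U f (pcomp C Q V' V \<psi>V (plevel C Q V' q1))
      = pcomp C Q V U f (pcomp C Q V' V \<psi>V (plevel C Q V' q2))"
    using f\<psi>V[OF Q1] f\<psi>V[OF Q2] TQ by simp
  then obtain m where m: "pro_mor C Q P m"
    and m1: "pcomp C Q P V p1 m = pcomp C Q V' V \<psi>V (plevel C Q V' q1)"
    and m2: "pcomp C Q P V p2 m = pcomp C Q V' V \<psi>V (plevel C Q V' q2)"
    by (rule pro_pullback_liftE[OF pb QA pcomp_pro_mor[OF Q V'_diagram V \<psi>V Q1]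
        pcomp_pro_mor[OF Q V'_diagram V \<psi>V Q2]])
  have h\<psi>V: "pcomp C Q V' W (pcomp C V' V W h \<psi>V) Qk = pcomp C Q P W (pcomp C P V W h pk) m"
    if Qk: "pro_mor C Q V' Qk" and pk: "pro_mor C P V pk"
      and mk: "pcomp C Q P V pk m = pcomp C Q V' V \<psi>V Qk" for Qk pk
    using pcomp_assoc[OF Q V'_diagram V W h \<psi>V Qk] mk pcomp_assoc[OF Q P V W h pk m] by simp
  have "pcomp C Q V' W (pcomp C V' V W h \<psi>V) (plevel C Q V' q1)
      = pcomp C Q V' W (pcomp C V' V W h \<psi>V) (plevel C Q V' q2)"
    using h\<psi>V[OF Q1 p1 m1] h\<psi>V[OF Q2 p2 m2] e by simp
  then show ?thesis
    using plevel_covering_descent[OF V'_diagram U'_diagram W Q t subcanonical t_covering q1 q2 Qpb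
        pcomp_pro_mor[OF V'_diagram V W h \<psi>V]] by simp
qed

lemma precomp_f_surj:
  assumes fl: "has_finite_limits C" and W: "pro_diagram C W"
    and pb: "pro_pullback C A V V U f f P p1 p2"
    and h: "pro_mor C V W h" and e: "pcomp C P V W h p1 = pcomp C P V W h p2"
  shows "\<exists>g. pro_mor C U W g \<and> pcomp C V U W g f = h"
proof -
  obtain g' where g': "pro_mor C U' W g'" and g'T: "pcomp C V' U' W g' T = pcomp C V' V W h \<psi>V"
    using descends_along_T[OF fl W pb h e] by blast
  define g where "g = pcomp C U U' W g' \<theta>U"
  have g: "pro_mor C U W g" unfolding g_def using pcomp_pro_mor[OF U U'_diagram W g' \<theta>U] .
  have "pcomp C U' U W g \<psi>U = g'"
    unfolding g_def using pcomp_assoc[OF U'_diagram U U'_diagram W g' \<theta>U \<psi>U] \<theta>U_\<psi>U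
      pcomp_pid_right[OF U'_diagram W g'] by simp
  then have "pcomp C V U W g f = pcomp C V V' W (pcomp C V' V W h \<psi>V) \<theta>V"
    using pcomp_f_factor[OF W g] g'T by simp
  also have "\<dots> = h"
    using pcomp_assoc[OF V V'_diagram V W h \<psi>V \<theta>V] \<psi>V_\<theta>V pcomp_pid_right[OF V W h] by simp
  finally show ?thesis using g by blast
qed

end

theorem lemma6p4:
  fixes C :: "('o,'a) cat" and J :: "'o \<Rightarrow> 'a set set" and A :: "'x set"
    and V U W P :: "('i,'o,'a) proobj"
    and f p1 p2 :: "'i \<Rightarrow> ('i \<times> 'a) set"
  assumes "admissible C J"
    and "infinite A"
    and "pro_obj C A V" and "pro_obj C A U" and "pro_obj C A W"
    and "pro_covering C J A V U f"
    and "pro_pullback C A V V U f f P p1 p2"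
  shows "(\<forall>g\<in>pmor C U W. pcomp C P V W (pcomp C V U W g f) p1
                          = pcomp C P V W (pcomp C V U W g f) p2)
       \<and> inj_on (\<lambda>g. pcomp C V U W g f) (pmor C U W)
       \<and> (\<lambda>g. pcomp C V U W g f) ` pmor C U W
           = {h \<in> pmor C V W. pcomp C P V W h p1 = pcomp C P V W h p2}"
proof -
  have sc: "subcanonical C J" and fl: "has_finite_limits C" and "category C"
    using assms(1) unfolding admissible_def coherent_site_def by auto
  then interpret small_category C by unfold_locales
  have V: "pro_diagram C V" and U: "pro_diagram C U" and W: "pro_diagram C W"
    using assms(3-5) pro_obj_pro_diagram by blast+
  have P: "pro_diagram C P" and p1: "pro_mor C P V p1" and p2: "pro_mor C P V p2"
    and fp: "pcomp C P V U f p1 = pcomp C P V U f p2"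
    using assms(7) pro_obj_pro_diagram[of C A P] unfolding pro_pullback_def by auto
  obtain V' U' t \<theta>V \<psi>V \<theta>U \<psi>U where "pro_covering_presentation C J A V U V' U' t f \<theta>V \<psi>V \<theta>U \<psi>U"
    using pro_covering_presentationE[OF V U sc assms(6)] .
  then interpret pro_covering_presentation C J A V U V' U' t f \<theta>V \<psi>V \<theta>U \<psi>U .
  have compat: "\<forall>g\<in>pmor C U W. pcomp C P V W (pcomp C V U W g f) p1 = pcomp C P V W (pcomp C V U W g f) p2"
    using pcomp_coequalizes[OF P V U W f_pro_mor p1 p2 _ fp] by (simp add: pmor_def)
  moreover have "inj_on (\<lambda>g. pcomp C V U W g f) (pmor C U W)"
    using precomp_f_inj[OF W] by (auto intro!: inj_onI simp: pmor_def)
  moreover have "(\<lambda>g. pcomp C V U W g f) ` pmor C U W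
      = {h \<in> pmor C V W. pcomp C P V W h p1 = pcomp C P V W h p2}"
    using compat pcomp_pro_mor[OF V U W _ f_pro_mor] precomp_f_surj[OF fl W assms(7)]
    by (auto simp: pmor_def image_iff) metis
  ultimately show ?thesis by blast
qed

end
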